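(* Let $f\colon W\to U$ be a fibrant map between path connected spaces, with basepoints $\dagger\in W$, $*\in U$ and biset $B(f,\dagger,* )$. Let $U'\subseteq U$ be path connected with basepoint $*'$, let $\{W'_z\}_{z\in I}$ be the path connected components of $f^{-1}(U')$, with basepoints $\dagger'_z\in W'_z$, and let $B(f|_{W'_z},\dagger'_z,*')$ be the biset of $f|_{W'_z}\colon W'_z\to U'$. Let $()^-\colon B(f|_{W'_z},\dagger'_z,*')\to B(f,\dagger,* )$ be the congruences given by choices of paths $\gamma_z$ in $W$ from $\dagger$ to $\dagger'_z$ and $\gamma_*$ in $U$ from $*$ to $*'$: loops $\delta$ at $\dagger'_z$ map to $\gamma_z\delta\gamma_z^{-1}$, loops $\delta$ at $*'$ map to $\gamma_*\delta\gamma_*^{-1}$, and $b\mapsto f(\gamma_z)\,b\,\gamma_*^{-1}$. Then \[\bigsqcup_{z\in I}\pi_1(W,\dagger)\otimes_{\pi_1(W'_z,\dagger'_z)}B(f|_{W'_z},\dagger'_z,*')\longrightarrow B(f,\dagger,* ),\qquad g\otimes b\mapsto g\,b^-,\] is an isomorphism of $\pi_1(W,\dagger)$-$\pi_1(U',*')$-bisets, where $\pi_1(U',*')$ acts on $B(f,\dagger,* )$ via $()^-\colon\pi_1(U',*')\to\pi_1(U,* )$ and $\pi_1(W'_z,\dagger'_z)$ acts on $\pi_1(W,\dagger)$ via $()^-$.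
   Context: For a continuous map $f\colon Y\to X$ and basepoints $\dagger\in Y$, $*\in X$, $B(f,\dagger,* )$ is the set of homotopy classes rel endpoints of paths in $X$ from $f(\dagger)$ to $*$, a $\pi_1(Y,\dagger)$-$\pi_1(X,* )$-biset via $[\lambda]\cdot[\gamma]=[f\circ\lambda\#\gamma]$ and $[\gamma]\cdot[\mu]=[\gamma\#\mu]$. A map is fibrant if it has the homotopy lifting property with respect to all spaces. The product $A\otimes_K C$ of a right $K$-set and a left $K$-set is $A\times C$ modulo $(ak,c)=(a,kc)$. *)

theory Defs
  imports "HOL-Analysis.Analysis"
begin

text \<open>Concatenation and reversal of paths (same formulas as the library's joinpaths and
reversepath, but without a type-class restriction, so they work for abstract topologies).\<close>

definition pjoin :: "(real \<Rightarrow> 'a) \<Rightarrow> (real \<Rightarrow> 'a) \<Rightarrow> real \<Rightarrow> 'a" (infixr \<open>#\<^sub>p\<close> 75) where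
  "pjoin g1 g2 = (\<lambda>x. if x \<le> 1/2 then g1 (2 * x) else g2 (2 * x - 1))"

definition prev :: "(real \<Rightarrow> 'a) \<Rightarrow> real \<Rightarrow> 'a" where
  "prev g = (\<lambda>x. g (1 - x))"

definition phom :: "'a topology \<Rightarrow> (real \<Rightarrow> 'a) \<Rightarrow> (real \<Rightarrow> 'a) \<Rightarrow> bool" where
  "phom X p q \<longleftrightarrow> pathin X p \<and> pathin X q \<and>
     homotopic_with (\<lambda>r. r 0 = p 0 \<and> r 1 = p 1) (top_of_set {0..1}) X p q"

definition pclass :: "'a topology \<Rightarrow> (real \<Rightarrow> 'a) \<Rightarrow> (real \<Rightarrow> 'a) set" where
  "pclass X p = {q. phom X p q}"

definition rep :: "'x set \<Rightarrow> 'x" where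
  "rep c = (SOME p. p \<in> c)"

definition paths_between :: "'a topology \<Rightarrow> 'a \<Rightarrow> 'a \<Rightarrow> (real \<Rightarrow> 'a) set" where
  "paths_between X x y = {p. pathin X p \<and> p 0 = x \<and> p 1 = y}"

definition pclasses :: "'a topology \<Rightarrow> 'a \<Rightarrow> 'a \<Rightarrow> (real \<Rightarrow> 'a) set set" where
  "pclasses X x y = pclass X ` paths_between X x y"

text \<open>Fundamental group pi_1(X,x) (as a set of classes; product is cjoin).\<close>
definition fund_group :: "'a topology \<Rightarrow> 'a \<Rightarrow> (real \<Rightarrow> 'a) set set" where
  "fund_group X x = pclasses X x x"

definition biset :: "'a topology \<Rightarrow> ('b \<Rightarrow> 'a) \<Rightarrow> 'b \<Rightarrow> 'a \<Rightarrow> (real \<Rightarrow> 'a) set set" where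
  "biset X f d s = pclasses X (f d) s"

definition cjoin :: "'a topology \<Rightarrow> (real \<Rightarrow> 'a) set \<Rightarrow> (real \<Rightarrow> 'a) set \<Rightarrow> (real \<Rightarrow> 'a) set" where
  "cjoin X a b = pclass X (rep a #\<^sub>p rep b)"

definition cmap :: "'a topology \<Rightarrow> ('b \<Rightarrow> 'a) \<Rightarrow> (real \<Rightarrow> 'b) set \<Rightarrow> (real \<Rightarrow> 'a) set" where
  "cmap X f a = pclass X (f \<circ> rep a)"

definition cconj :: "'a topology \<Rightarrow> (real \<Rightarrow> 'a) \<Rightarrow> (real \<Rightarrow> 'a) set \<Rightarrow> (real \<Rightarrow> 'a) set" where
  "cconj X \<gamma> a = pclass X ((\<gamma> #\<^sub>p rep a) #\<^sub>p prev \<gamma>)"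

definition blact :: "'a topology \<Rightarrow> ('b \<Rightarrow> 'a) \<Rightarrow> (real \<Rightarrow> 'b) set \<Rightarrow> (real \<Rightarrow> 'a) set \<Rightarrow> (real \<Rightarrow> 'a) set" where
  "blact X f l g = cjoin X (cmap X f l) g"

definition bract :: "'a topology \<Rightarrow> (real \<Rightarrow> 'a) set \<Rightarrow> (real \<Rightarrow> 'a) set \<Rightarrow> (real \<Rightarrow> 'a) set" where
  "bract X g m = cjoin X g m"

definition HLP_wrt :: "'c topology \<Rightarrow> 'b topology \<Rightarrow> 'a topology \<Rightarrow> ('b \<Rightarrow> 'a) \<Rightarrow> bool" where
  "HLP_wrt Z Y X f \<longleftrightarrow>
     (\<forall>H h0. continuous_map (prod_topology Z (top_of_set {0..1::real})) X H \<and>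
             continuous_map Z Y h0 \<and> (\<forall>z\<in>topspace Z. f (h0 z) = H (z, 0)) \<longrightarrow>
        (\<exists>G. continuous_map (prod_topology Z (top_of_set {0..1::real})) Y G \<and>
             (\<forall>z\<in>topspace Z. \<forall>t\<in>{0..1}. f (G (z, t)) = H (z, t)) \<and>
             (\<forall>z\<in>topspace Z. G (z, 0) = h0 z)))"

text \<open>HOL cannot quantify over all types inside a formula; we quantify over all topological
  spaces whose points lie in the type real \<times> real (all spaces of cardinality at most
  the continuum, up to homeomorphism).\<close>
definition fibrant :: "'b topology \<Rightarrow> 'a topology \<Rightarrow> ('b \<Rightarrow> 'a) \<Rightarrow> bool" where
  "fibrant Y X f \<longleftrightarrow> continuous_map Y X f \<and> (\<forall>Z :: (real \<times> real) topology. HLP_wrt Z Y X f)"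

definition tensor_gen :: "'a set \<Rightarrow> 'c set \<Rightarrow> 'k set \<Rightarrow> ('a \<Rightarrow> 'k \<Rightarrow> 'a) \<Rightarrow> ('k \<Rightarrow> 'c \<Rightarrow> 'c)
                         \<Rightarrow> ('a \<times> 'c) \<Rightarrow> ('a \<times> 'c) \<Rightarrow> bool" where
  "tensor_gen A C K ra la x y \<longleftrightarrow> x \<in> A \<times> C \<and> y \<in> A \<times> C \<and>
     (\<exists>a\<in>A. \<exists>c\<in>C. \<exists>k\<in>K. x = (ra a k, c) \<and> y = (a, la k c))"

definition tensor_rel :: "'a set \<Rightarrow> 'c set \<Rightarrow> 'k set \<Rightarrow> ('a \<Rightarrow> 'k \<Rightarrow> 'a) \<Rightarrow> ('k \<Rightarrow> 'c \<Rightarrow> 'c)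
                         \<Rightarrow> (('a \<times> 'c) \<times> ('a \<times> 'c)) set" where
  "tensor_rel A C K ra la = {(x, y). x \<in> A \<times> C \<and> y \<in> A \<times> C \<and>
     (sup (tensor_gen A C K ra la) (tensor_gen A C K ra la)\<inverse>\<inverse>)\<^sup>*\<^sup>* x y}"

definition tensor_prod :: "'a set \<Rightarrow> 'c set \<Rightarrow> 'k set \<Rightarrow> ('a \<Rightarrow> 'k \<Rightarrow> 'a) \<Rightarrow> ('k \<Rightarrow> 'c \<Rightarrow> 'c)
                         \<Rightarrow> ('a \<times> 'c) set set" where
  "tensor_prod A C K ra la = (A \<times> C) // tensor_rel A C K ra la"

definition tensor_elt :: "'a set \<Rightarrow> 'c set \<Rightarrow> 'k set \<Rightarrow> ('a \<Rightarrow> 'k \<Rightarrow> 'a) \<Rightarrow> ('k \<Rightarrow> 'c \<Rightarrow> 'c)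
                         \<Rightarrow> 'a \<Rightarrow> 'c \<Rightarrow> ('a \<times> 'c) set" where
  "tensor_elt A C K ra la a c = tensor_rel A C K ra la `` {(a, c)}"

definition comps :: "'b topology \<Rightarrow> ('b \<Rightarrow> 'a) \<Rightarrow> 'a set \<Rightarrow> 'b set set" where
  "comps Y f U' = path_components_of (subtopology Y {w \<in> topspace Y. f w \<in> U'})"

definition factor :: "'b topology \<Rightarrow> 'a topology \<Rightarrow> ('b \<Rightarrow> 'a) \<Rightarrow> 'b \<Rightarrow> 'a set \<Rightarrow> 'a
                      \<Rightarrow> 'b set \<Rightarrow> 'b \<Rightarrow> (real \<Rightarrow> 'b) \<Rightarrow> ((real \<Rightarrow> 'b) set \<times> (real \<Rightarrow> 'a) set) set set" where
  "factor Y X f dag U' st' C b0 \<gamma> =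
     tensor_prod (fund_group Y dag) (biset (subtopology X U') f b0 st')
       (fund_group (subtopology Y C) b0)
       (\<lambda>g k. cjoin Y g (cconj Y \<gamma> k))
       (\<lambda>k b. blact (subtopology X U') f k b)"

definition factor_elt :: "'b topology \<Rightarrow> 'a topology \<Rightarrow> ('b \<Rightarrow> 'a) \<Rightarrow> 'b \<Rightarrow> 'a set \<Rightarrow> 'a
                      \<Rightarrow> 'b set \<Rightarrow> 'b \<Rightarrow> (real \<Rightarrow> 'b) \<Rightarrow> (real \<Rightarrow> 'b) set \<Rightarrow> (real \<Rightarrow> 'a) set
                      \<Rightarrow> ((real \<Rightarrow> 'b) set \<times> (real \<Rightarrow> 'a) set) set" where
  "factor_elt Y X f dag U' st' C b0 \<gamma> g b =
     tensor_elt (fund_group Y dag) (biset (subtopology X U') f b0 st')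
       (fund_group (subtopology Y C) b0)
       (\<lambda>g k. cjoin Y g (cconj Y \<gamma> k))
       (\<lambda>k b. blact (subtopology X U') f k b) g b"

definition bminus :: "'a topology \<Rightarrow> ('b \<Rightarrow> 'a) \<Rightarrow> (real \<Rightarrow> 'b) \<Rightarrow> (real \<Rightarrow> 'a) \<Rightarrow> (real \<Rightarrow> 'a) set
                      \<Rightarrow> (real \<Rightarrow> 'a) set" where
  "bminus X f \<gamma> \<gamma>s b = pclass X (((f \<circ> \<gamma>) #\<^sub>p rep b) #\<^sub>p prev \<gamma>s)"

end

theory Submission
  imports Defs
begin

text \<open>A class \<open>c\<close> in \<open>B(f, dag, st)\<close>, followed by \<open>gst\<close>, lifts to a path \<open>\<rho>\<close> in \<open>Y\<close> from
  \<open>dag\<close> whose endpoint lies over \<open>st'\<close>, hence in exactly one path component \<open>C\<close> of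
  \<open>f\<^sup>-\<^sup>1(U')\<close>; a path \<open>\<delta>\<close> in \<open>C\<close> from \<open>bp C\<close> to that endpoint yields the preimage
  \<open>[\<rho> \<delta>\<^sup>-\<^sup>1 (gam C)\<^sup>-\<^sup>1] \<otimes> [f \<circ> \<delta>]\<close> of \<open>c\<close>. By homotopy lifting, two lifts covering
  homotopic paths differ by a path in the fibre over \<open>st'\<close>, and such a path can be moved
  across the tensor sign at no cost; so the preimage depends only on \<open>c\<close>, which is injectivity.\<close>

section \<open>Paths and their homotopy classes in abstract topological spaces\<close>

lemma pjoin_0 [simp]: "(p #\<^sub>p q) 0 = p 0"
  by (simp add: pjoin_def)

lemma pjoin_1 [simp]: "(p #\<^sub>p q) 1 = q 1"
  by (simp add: pjoin_def)

lemma prev_0 [simp]: "prev p 0 = p 1"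
  by (simp add: prev_def)

lemma prev_1 [simp]: "prev p 1 = p 0"
  by (simp add: prev_def)

lemma prev_prev [simp]: "prev (prev p) = p"
  by (simp add: prev_def)

lemma comp_pjoin [simp]: "g \<circ> (p #\<^sub>p q) = (g \<circ> p) #\<^sub>p (g \<circ> q)"
  by (simp add: pjoin_def fun_eq_iff)

lemma comp_prev [simp]: "g \<circ> prev p = prev (g \<circ> p)"
  by (simp add: prev_def fun_eq_iff)

lemma comp_joinpaths: "k \<circ> (P +++ Q) = (k \<circ> P) #\<^sub>p (k \<circ> Q)"
  by (simp add: joinpaths_def pjoin_def fun_eq_iff)

lemma prev_pjoin:
  assumes "p 1 = q 0"
  shows "prev (p #\<^sub>p q) = prev q #\<^sub>p prev p"
proof
  fix x :: real
  consider "x < 1/2" | "x = 1/2" | "x > 1/2"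
    by linarith
  then show "prev (p #\<^sub>p q) x = (prev q #\<^sub>p prev p) x"
  proof cases
    case 2
    then have "2 - 2*x = 1" "1 - 2*x = 0" "1 - x \<le> 1/2"
      by auto
    then show ?thesis
      using assms by (simp add: prev_def pjoin_def)
  qed (auto simp: prev_def pjoin_def algebra_simps)
qed

lemma pathin_pjoin [simp]:
  assumes "pathin X g1" "pathin X g2" "g1 1 = g2 0"
  shows "pathin X (g1 #\<^sub>p g2)"
proof -
  let ?I = "top_of_set {0..1::real}"
  have g1: "continuous_map ?I X g1" and g2: "continuous_map ?I X g2"
    using assms by (auto simp: pathin_def)
  have eq: "g1 #\<^sub>p g2 = (\<lambda>x. if x \<le> 1/2 then (g1 \<circ> (\<lambda>t. 2 * t)) x else (g2 \<circ> (\<lambda>t. 2 * t - 1)) x)"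
    by (simp add: pjoin_def fun_eq_iff)
  show ?thesis
    unfolding pathin_def eq
  proof (intro continuous_map_cases_le continuous_map_compose, force, force)
    show "continuous_map (subtopology ?I {x \<in> topspace ?I. x \<le> 1/2}) ?I ((*) 2)"
      by (auto simp: continuous_map_in_subtopology continuous_map_from_subtopology)
    have "continuous_map (subtopology ?I {x. 0 \<le> x \<and> x \<le> 1 \<and> 1 \<le> x * 2}) euclideanreal (\<lambda>t. 2 * t - 1)"
      by (intro continuous_intros) (force intro: continuous_map_from_subtopology)
    then show "continuous_map (subtopology ?I {x \<in> topspace ?I. 1/2 \<le> x}) ?I (\<lambda>t. 2 * t - 1)"
      by (force simp: continuous_map_in_subtopology)
    show "(g1 \<circ> (*) 2) x = (g2 \<circ> (\<lambda>t. 2 * t - 1)) x" if "x = 1/2" for x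
    proof -
      have "2 * x = 1" "2 * x - 1 = 0"
        using that by auto
      then show ?thesis
        using assms by simp
    qed
  qed (use g1 g2 in auto)
qed

lemma pathin_prev [simp]: "pathin X g \<Longrightarrow> pathin X (prev g)"
proof -
  assume "pathin X g"
  moreover have "continuous_map (top_of_set {0..1::real}) (top_of_set {0..1}) (\<lambda>x. 1 - x)"
    by (auto intro!: continuous_intros)
  moreover have "prev g = g \<circ> (\<lambda>x. 1 - x)"
    by (simp add: prev_def fun_eq_iff)
  ultimately show ?thesis
    unfolding pathin_def by (metis continuous_map_compose)
qed

lemma pathin_in_topspace: "pathin T p \<Longrightarrow> t \<in> {0..1} \<Longrightarrow> p t \<in> topspace T"
  by (force simp: pathin_def continuous_map_def Pi_iff)

lemma pathin_endpoints_in_topspace [simp]: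
  "pathin T p \<Longrightarrow> p 0 \<in> topspace T" "pathin T p \<Longrightarrow> p 1 \<in> topspace T"
  by (simp_all add: pathin_in_topspace)

lemma pathin_eq_on: "pathin T p \<Longrightarrow> (\<And>x. x \<in> {0..1} \<Longrightarrow> q x = p x) \<Longrightarrow> pathin T q"
  unfolding pathin_def by (metis (no_types, lifting) continuous_map_eq topspace_euclidean_subtopology)

lemma paths_between_pjoin [intro]:
  "p \<in> paths_between T x y \<Longrightarrow> q \<in> paths_between T y z \<Longrightarrow> p #\<^sub>p q \<in> paths_between T x z"
  by (simp add: paths_between_def)

lemma paths_between_prev [intro]: "p \<in> paths_between T x y \<Longrightarrow> prev p \<in> paths_between T y x"
  by (simp add: paths_between_def)

lemma paths_between_compose [intro]:
  "p \<in> paths_between S x y \<Longrightarrow> continuous_map S T g \<Longrightarrow> g \<circ> p \<in> paths_between T (g x) (g y)"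
  by (auto simp: paths_between_def intro: pathin_compose)

lemma paths_between_subtopologyD: "p \<in> paths_between (subtopology T S) x y \<Longrightarrow> p \<in> paths_between T x y"
  by (simp add: paths_between_def pathin_subtopology)

lemma phom_pathin: "phom T p q \<Longrightarrow> pathin T p \<and> pathin T q"
  by (simp add: phom_def)

lemma phom_ends: "phom T p q \<Longrightarrow> q 0 = p 0 \<and> q 1 = p 1"
  unfolding phom_def by (metis (mono_tags, lifting) homotopic_with_imp_property)

lemma phom_paths_between: "phom T p q \<Longrightarrow> p \<in> paths_between T x y \<Longrightarrow> q \<in> paths_between T x y"
  using phom_ends phom_pathin by (fastforce simp: paths_between_def)

lemma phom_refl: "pathin T p \<Longrightarrow> phom T p p"
  by (simp add: phom_def pathin_def)

lemma phom_sym: "phom T p q \<Longrightarrow> phom T q p"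
  using phom_ends[of T p q] homotopic_with_symD[of "\<lambda>r. r 0 = p 0 \<and> r 1 = p 1"]
  unfolding phom_def by auto

lemma phom_trans [trans]: "phom T p q \<Longrightarrow> phom T q r \<Longrightarrow> phom T p r"
  using phom_ends[of T p q] homotopic_with_trans[of "\<lambda>r. r 0 = p 0 \<and> r 1 = p 1"]
  unfolding phom_def by auto

lemma phom_eq_on:
  assumes p: "pathin T p" and eq: "\<And>x. x \<in> {0..1} \<Longrightarrow> q x = p x"
  shows "phom T p q"
proof -
  have "homotopic_with (\<lambda>r. r 0 = p 0 \<and> r 1 = p 1) (top_of_set {0..1}) T p p"
    using p by (simp add: pathin_def)
  then have "homotopic_with (\<lambda>r. r 0 = p 0 \<and> r 1 = p 1) (top_of_set {0..1}) T p q"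
    by (rule homotopic_with_eq) (auto simp: eq)
  then show ?thesis
    using p eq pathin_eq_on by (auto simp: phom_def)
qed

lemma phom_eq_on_cong:
  assumes "phom T p q" "\<And>x. x \<in> {0..1} \<Longrightarrow> p' x = p x" "\<And>x. x \<in> {0..1} \<Longrightarrow> q' x = q x"
  shows "phom T p' q'"
  by (metis assms phom_eq_on phom_pathin phom_sym phom_trans)

lemma phom_compose: "phom S p q \<Longrightarrow> continuous_map S T g \<Longrightarrow> phom T (g \<circ> p) (g \<circ> q)"
  unfolding phom_def by (auto intro: pathin_compose homotopic_with_compose_continuous_map_left)

lemma phom_subtopologyD: "phom (subtopology T A) p q \<Longrightarrow> phom T p q"
  using phom_compose[of "subtopology T A" p q T id] by (simp add: continuous_map_from_subtopology)

lemma phom_prev: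
  assumes "phom T p q"
  shows "phom T (prev p) (prev q)"
proof -
  have flip: "continuous_map (top_of_set {0..1::real}) (top_of_set {0..1}) (\<lambda>x. 1 - x)"
    by (auto intro!: continuous_intros)
  have "homotopic_with (\<lambda>r. r 0 = p 0 \<and> r 1 = p 1) (top_of_set {0..1}) T p q"
    using assms by (simp add: phom_def)
  then have "homotopic_with (\<lambda>r. r 0 = p 1 \<and> r 1 = p 0) (top_of_set {0..1}) T
               (p \<circ> (\<lambda>x. 1 - x)) (q \<circ> (\<lambda>x. 1 - x))"
    by (rule homotopic_with_compose_continuous_map_right[OF _ flip]) auto
  moreover have "prev p = p \<circ> (\<lambda>x. 1 - x)" "prev q = q \<circ> (\<lambda>x. 1 - x)"
    by (auto simp: prev_def fun_eq_iff)
  moreover have "pathin T (prev p)" "pathin T (prev q)"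
    using assms by (auto simp: phom_def)
  ultimately show ?thesis
    by (simp add: phom_def)
qed

lemma phom_pjoin:
  assumes hp: "phom T p p'" and hq: "phom T q q'" and e: "p 1 = q 0"
  shows "phom T (p #\<^sub>p q) (p' #\<^sub>p q')"
proof -
  let ?I = "{0..1::real}"
  obtain h where ch: "continuous_map (top_of_set (?I \<times> ?I)) T h"
    and h0: "\<forall>x. h (0, x) = p x" and h1: "\<forall>x. h (1, x) = p' x"
    and hP: "\<forall>t\<in>?I. h (t, 0) = p 0 \<and> h (t, 1) = p 1"
    using hp by (auto simp: phom_def homotopic_with_def)
  obtain k where ck: "continuous_map (top_of_set (?I \<times> ?I)) T k"
    and k0: "\<forall>x. k (0, x) = q x" and k1: "\<forall>x. k (1, x) = q' x"
    and kP: "\<forall>t\<in>?I. k (t, 0) = q 0 \<and> k (t, 1) = q 1"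
    using hq by (auto simp: phom_def homotopic_with_def)
  let ?S = "top_of_set (?I \<times> ?I)"
  define H where "H = (\<lambda>z. if snd z \<le> 1/2 then (h \<circ> (\<lambda>z. (fst z, 2 * snd z))) z
                            else (k \<circ> (\<lambda>z. (fst z, 2 * snd z - 1))) z)"
  have "continuous_map ?S T H"
    unfolding H_def
  proof (rule continuous_map_cases_le)
    show "continuous_map ?S euclideanreal snd"
      by (simp add: continuous_on_snd)
    have "continuous_map (subtopology ?S {x \<in> topspace ?S. snd x \<le> 1/2}) ?S (\<lambda>z. (fst z, 2 * snd z))"
      by (auto simp: subtopology_subtopology continuous_map_subtopology_eu intro!: continuous_intros)
    then show "continuous_map (subtopology ?S {x \<in> topspace ?S. snd x \<le> 1/2}) T (h \<circ> (\<lambda>z. (fst z, 2 * snd z)))"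
      using ch continuous_map_compose by blast
    have "continuous_map (subtopology ?S {x \<in> topspace ?S. 1/2 \<le> snd x}) ?S (\<lambda>z. (fst z, 2 * snd z - 1))"
      by (auto simp: subtopology_subtopology continuous_map_subtopology_eu intro!: continuous_intros)
    then show "continuous_map (subtopology ?S {x \<in> topspace ?S. 1/2 \<le> snd x}) T (k \<circ> (\<lambda>z. (fst z, 2 * snd z - 1)))"
      using ck continuous_map_compose by blast
    show "(h \<circ> (\<lambda>z. (fst z, 2 * snd z))) x = (k \<circ> (\<lambda>z. (fst z, 2 * snd z - 1))) x"
      if "x \<in> topspace ?S" "snd x = 1/2" for x
    proof -
      have "fst x \<in> ?I"
        using that by auto
      then show ?thesis
        using that hP kP e by (simp add: mult.commute)
    qed
  qed simp
  then have "homotopic_with (\<lambda>r. r 0 = (p #\<^sub>p q) 0 \<and> r 1 = (p #\<^sub>p q) 1) (top_of_set ?I) T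
               (p #\<^sub>p q) (p' #\<^sub>p q')"
    unfolding homotopic_with_def
    using h0 h1 k0 k1 hP kP by (intro exI[of _ H]) (auto simp: H_def pjoin_def)
  moreover have "pathin T (p #\<^sub>p q)" "pathin T (p' #\<^sub>p q')"
    using hp hq e phom_ends[OF hp] phom_ends[OF hq] by (auto simp: phom_def)
  ultimately show ?thesis
    by (simp add: phom_def)
qed

lemma phom_pjoin_left: "phom T p p' \<Longrightarrow> pathin T q \<Longrightarrow> p 1 = q 0 \<Longrightarrow> phom T (p #\<^sub>p q) (p' #\<^sub>p q)"
  by (simp add: phom_pjoin phom_refl)

lemma phom_pjoin_right: "phom T q q' \<Longrightarrow> pathin T p \<Longrightarrow> p 1 = q 0 \<Longrightarrow> phom T (p #\<^sub>p q) (p #\<^sub>p q')"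
  by (simp add: phom_pjoin phom_refl)

text \<open>Straight-line homotopies in a convex parameter space, pushed forward along \<open>k\<close>;
  the groupoid laws are all reparametrisations of a single path.\<close>

lemma phom_compose_convex:
  fixes P Q :: "real \<Rightarrow> 'v::real_normed_vector"
  assumes S: "convex S" and k: "continuous_map (top_of_set S) T k"
    and P: "path P" "path_image P \<subseteq> S" and Q: "path Q" "path_image Q \<subseteq> S"
    and ends: "pathstart P = pathstart Q" "pathfinish P = pathfinish Q"
  shows "phom T (k \<circ> P) (k \<circ> Q)"
proof -
  define L where "L = (\<lambda>z::real\<times>real. (1 - fst z) *\<^sub>R P (snd z) + fst z *\<^sub>R Q (snd z))"
  have cP: "continuous_on {0..1} P" and cQ: "continuous_on {0..1} Q"
    using P Q by (auto simp: path_def)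
  have "continuous_on ({0..1}\<times>{0..1}) L"
    unfolding L_def
    by (intro continuous_intros continuous_on_compose2[OF cP] continuous_on_compose2[OF cQ]) auto
  moreover have "L ` ({0..1}\<times>{0..1}) \<subseteq> S"
  proof clarify
    fix t x :: real
    assume "t \<in> {0..1}" "x \<in> {0..1}"
    moreover from \<open>x \<in> {0..1}\<close> have "P x \<in> S" "Q x \<in> S"
      using P Q by (auto simp: path_image_def image_subset_iff)
    ultimately show "L (t, x) \<in> S"
      unfolding L_def using S by (auto intro: convexD_alt)
  qed
  ultimately have "continuous_map (top_of_set ({0..1}\<times>{0..1})) (top_of_set S) L"
    by (auto simp: continuous_map_subtopology_eu)
  from continuous_map_compose[OF this k]
  have cL: "continuous_map (prod_topology (top_of_set {0..1}) (top_of_set {0..1})) T (k \<circ> L)"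
    by simp
  have "homotopic_with (\<lambda>r. r 0 = (k \<circ> P) 0 \<and> r 1 = (k \<circ> P) 1) (top_of_set {0..1}) T (k \<circ> P) (k \<circ> Q)"
    unfolding homotopic_with_def
  proof (intro exI conjI)
    show "continuous_map (prod_topology (top_of_set {0..1}) (top_of_set {0..1})) T (k \<circ> L)"
      by (rule cL)
    show "\<forall>x. (k \<circ> L) (0, x) = (k \<circ> P) x" "\<forall>x. (k \<circ> L) (1, x) = (k \<circ> Q) x"
      by (simp_all add: L_def)
    show "\<forall>t\<in>{0..1}. (\<lambda>x. (k \<circ> L) (t, x)) 0 = (k \<circ> P) 0 \<and> (\<lambda>x. (k \<circ> L) (t, x)) 1 = (k \<circ> P) 1"
      using ends by (auto simp: L_def pathstart_def pathfinish_def algebra_simps)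
  qed
  moreover have "pathin T (k \<circ> P)" "pathin T (k \<circ> Q)"
    using P Q k unfolding pathin_def path_def path_image_def
    by (auto intro!: continuous_map_compose[OF _ k] simp: continuous_map_subtopology_eu image_subset_iff)
  ultimately show ?thesis
    by (simp add: phom_def)
qed

lemma phom_reparam:
  fixes P Q :: "real \<Rightarrow> real"
  assumes "pathin T k"
    and "path P" "path_image P \<subseteq> {0..1}" "path Q" "path_image Q \<subseteq> {0..1}"
    and "pathstart P = pathstart Q" "pathfinish P = pathfinish Q"
  shows "phom T (k \<circ> P) (k \<circ> Q)"
  using phom_compose_convex[of "{0..1}" T k P Q] assms by (simp add: pathin_def)

lemma path_image_linepath_unit: "a \<in> {0..1} \<Longrightarrow> b \<in> {0..1} \<Longrightarrow> path_image (linepath a b) \<subseteq> {0..1::real}"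
  by (simp add: closed_segment_subset)

lemmas reparam_intros = path_join_imp path_linepath subset_path_image_join path_image_linepath_unit

lemma pjoin_eq_on:
  assumes "\<And>x. x \<in> {0..1} \<Longrightarrow> p x = p' x" "\<And>x. x \<in> {0..1} \<Longrightarrow> q x = q' x" "x \<in> {0..1::real}"
  shows "(p #\<^sub>p q) x = (p' #\<^sub>p q') x"
  using assms by (auto simp: pjoin_def)

lemma phom_pjoin_assoc:
  assumes a: "a \<in> paths_between T x y" and b: "b \<in> paths_between T y z" and c: "c \<in> paths_between T z w"
  shows "phom T ((a #\<^sub>p b) #\<^sub>p c) (a #\<^sub>p (b #\<^sub>p c))"
proof -
  let ?k = "a #\<^sub>p (b #\<^sub>p c)"
  have "pathin T ?k"
    using a b c by (auto simp: paths_between_def)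
  then have h: "phom T (?k \<circ> ((linepath 0 (1/2) +++ linepath (1/2) (3/4)) +++ linepath (3/4) 1)) (?k \<circ> linepath 0 1)"
    by (rule phom_reparam; (intro reparam_intros)?; simp)
  have "(?k \<circ> linepath 0 (1/2)) v = a v" if "v \<in> {0..1}" for v
    using that by (auto simp: pjoin_def linepath_def)
  moreover have "(?k \<circ> linepath (1/2) (3/4)) v = b v" if "v \<in> {0..1}" for v
  proof (cases "v = 0")
    case False
    have "linepath (1/2) (3/4) v = 1/2 + v/4" "2 * (1/2 + v/4) - 1 = v/2"
      by (simp_all add: linepath_def field_simps)
    then show ?thesis
      using that False by (simp add: pjoin_def)
  qed (use a b in \<open>simp add: pjoin_def linepath_def paths_between_def\<close>)
  moreover have "(?k \<circ> linepath (3/4) 1) v = c v" if "v \<in> {0..1}" for v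
  proof (cases "v = 0")
    case False
    have "linepath (3/4) 1 v = 3/4 + v/4" "2 * (3/4 + v/4) - 1 = 1/2 + v/2" "2 * (1/2 + v/2) - 1 = v"
      by (simp_all add: linepath_def field_simps)
    then show ?thesis
      using that False by (simp add: pjoin_def)
  qed (use b c in \<open>simp add: pjoin_def linepath_def paths_between_def\<close>)
  ultimately have "(?k \<circ> ((linepath 0 (1/2) +++ linepath (1/2) (3/4)) +++ linepath (3/4) 1)) x = ((a #\<^sub>p b) #\<^sub>p c) x"
    if "x \<in> {0..1}" for x
    unfolding comp_joinpaths using that by (intro pjoin_eq_on) auto
  then show ?thesis
    by (intro phom_eq_on_cong[OF h]) (auto simp: linepath_def)
qed

lemma phom_const_pjoin:
  assumes a: "a \<in> paths_between T x y"
  shows "phom T ((\<lambda>_. x) #\<^sub>p a) a"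
proof -
  have "phom T (a \<circ> (linepath 0 0 +++ linepath 0 1)) (a \<circ> linepath 0 1)"
    using a unfolding paths_between_def by (intro phom_reparam; (intro reparam_intros)?; simp)
  then show ?thesis
    by (rule phom_eq_on_cong) (use a in \<open>auto simp: paths_between_def linepath_def pjoin_def joinpaths_def\<close>)
qed

lemma phom_pjoin_const:
  assumes a: "a \<in> paths_between T x y"
  shows "phom T (a #\<^sub>p (\<lambda>_. y)) a"
proof -
  have "phom T (a \<circ> (linepath 0 1 +++ linepath 1 1)) (a \<circ> linepath 0 1)"
    using a unfolding paths_between_def by (intro phom_reparam; (intro reparam_intros)?; simp)
  then show ?thesis
    by (rule phom_eq_on_cong) (use a in \<open>auto simp: paths_between_def linepath_def pjoin_def joinpaths_def\<close>)
qed

lemma phom_pjoin_prev: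
  assumes a: "a \<in> paths_between T x y"
  shows "phom T (a #\<^sub>p prev a) (\<lambda>_. x)"
proof -
  have "phom T (a \<circ> (linepath 0 1 +++ linepath 1 0)) (a \<circ> linepath 0 0)"
    using a unfolding paths_between_def by (intro phom_reparam; (intro reparam_intros)?; simp)
  then show ?thesis
    by (rule phom_eq_on_cong)
      (use a in \<open>auto simp: paths_between_def linepath_def pjoin_def joinpaths_def prev_def algebra_simps\<close>)
qed

lemma phom_prev_pjoin: "a \<in> paths_between T x y \<Longrightarrow> phom T (prev a #\<^sub>p a) (\<lambda>_. y)"
  using phom_pjoin_prev[OF paths_between_prev] by fastforce

lemma pclass_mem: "pathin T p \<Longrightarrow> p \<in> pclass T p"
  by (simp add: pclass_def phom_refl)

lemma phom_rep_pclass: "pathin T p \<Longrightarrow> phom T p (rep (pclass T p))"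
  using someI[of "\<lambda>q. q \<in> pclass T p" p] pclass_mem[of T p] by (simp add: rep_def pclass_def)

lemma pclass_eq: "phom T p q \<Longrightarrow> pclass T p = pclass T q"
  unfolding pclass_def by (auto intro: phom_trans phom_sym)

lemma pclass_eq_iff: "pathin T p \<Longrightarrow> pclass T p = pclass T q \<longleftrightarrow> phom T p q"
  by (metis mem_Collect_eq pclass_def pclass_eq pclass_mem phom_sym)

lemma pclass_eq_on: "pathin T p \<Longrightarrow> (\<And>x. x \<in> {0..1} \<Longrightarrow> q x = p x) \<Longrightarrow> pclass T q = pclass T p"
  using pclass_eq[OF phom_eq_on, of T p q] by simp

lemma pclassesI: "p \<in> paths_between T x y \<Longrightarrow> pclass T p \<in> pclasses T x y"
  by (simp add: pclasses_def)

lemma pclassesE: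
  assumes "c \<in> pclasses T x y"
  obtains p where "p \<in> paths_between T x y" "c = pclass T p"
  using assms by (auto simp: pclasses_def)

lemma cjoin_pclass:
  assumes "p \<in> paths_between T x y" "q \<in> paths_between T y z"
  shows "cjoin T (pclass T p) (pclass T q) = pclass T (p #\<^sub>p q)"
proof -
  have "phom T p (rep (pclass T p))" "phom T q (rep (pclass T q))"
    using assms phom_rep_pclass by (auto simp: paths_between_def)
  from phom_pjoin[OF this] have "phom T (p #\<^sub>p q) (rep (pclass T p) #\<^sub>p rep (pclass T q))"
    using assms by (simp add: paths_between_def)
  then show ?thesis
    unfolding cjoin_def by (simp add: pclass_eq)
qed

lemma cmap_pclass: "pathin S p \<Longrightarrow> continuous_map S T g \<Longrightarrow> cmap T g (pclass S p) = pclass T (g \<circ> p)"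
  unfolding cmap_def using pclass_eq[OF phom_compose[OF phom_rep_pclass]] by metis

lemma blact_pclass:
  assumes "p \<in> paths_between S x x" "continuous_map S T f" "q \<in> paths_between T (f x) z"
  shows "blact T f (pclass S p) (pclass T q) = pclass T ((f \<circ> p) #\<^sub>p q)"
proof -
  have "cmap T f (pclass S p) = pclass T (f \<circ> p)"
    using assms by (simp add: cmap_pclass paths_between_def)
  moreover have "f \<circ> p \<in> paths_between T (f x) (f x)"
    using assms by blast
  ultimately show ?thesis
    using assms cjoin_pclass by (simp add: blact_def)
qed

lemma cconj_pclass:
  assumes p: "p \<in> paths_between (subtopology T A) y y" and \<gamma>: "\<gamma> \<in> paths_between T x y"
  shows "cconj T \<gamma> (pclass (subtopology T A) p) = pclass T ((\<gamma> #\<^sub>p p) #\<^sub>p prev \<gamma>)"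
proof -
  have r: "phom T p (rep (pclass (subtopology T A) p))"
    using p by (simp add: paths_between_def phom_subtopologyD[OF phom_rep_pclass])
  have "phom T ((\<gamma> #\<^sub>p p) #\<^sub>p prev \<gamma>) ((\<gamma> #\<^sub>p rep (pclass (subtopology T A) p)) #\<^sub>p prev \<gamma>)"
    using \<gamma> r phom_ends[OF r] phom_pathin[OF r] p
    by (intro phom_pjoin_left phom_pjoin_right) (auto simp: paths_between_def pathin_subtopology)
  then show ?thesis
    unfolding cconj_def by (metis pclass_eq)
qed

lemma bminus_pclass:
  assumes q: "q \<in> paths_between (subtopology X A) y z" and \<gamma>: "f \<circ> \<gamma> \<in> paths_between X x y"
    and \<gamma>s: "\<gamma>s \<in> paths_between X w z"
  shows "bminus X f \<gamma> \<gamma>s (pclass (subtopology X A) q) = pclass X (((f \<circ> \<gamma>) #\<^sub>p q) #\<^sub>p prev \<gamma>s)"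
proof -
  have r: "phom X q (rep (pclass (subtopology X A) q))"
    using q by (simp add: paths_between_def phom_subtopologyD[OF phom_rep_pclass])
  have "phom X (((f \<circ> \<gamma>) #\<^sub>p q) #\<^sub>p prev \<gamma>s) (((f \<circ> \<gamma>) #\<^sub>p rep (pclass (subtopology X A) q)) #\<^sub>p prev \<gamma>s)"
    using \<gamma> \<gamma>s r phom_ends[OF r] phom_pathin[OF r] q
    by (intro phom_pjoin_left phom_pjoin_right) (auto simp: paths_between_def pathin_subtopology)
  then show ?thesis
    unfolding bminus_def by (metis pclass_eq)
qed

definition is_pclass :: "'a topology \<Rightarrow> (real \<Rightarrow> 'a) set \<Rightarrow> bool" where
  "is_pclass T c \<longleftrightarrow> (\<exists>p. pathin T p \<and> c = pclass T p)"

definition cstart :: "(real \<Rightarrow> 'a) set \<Rightarrow> 'a" where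
  "cstart c = rep c 0"

definition cfinish :: "(real \<Rightarrow> 'a) set \<Rightarrow> 'a" where
  "cfinish c = rep c 1"

definition cinv :: "'a topology \<Rightarrow> (real \<Rightarrow> 'a) set \<Rightarrow> (real \<Rightarrow> 'a) set" where
  "cinv T c = pclass T (prev (rep c))"

definition cid :: "'a topology \<Rightarrow> 'a \<Rightarrow> (real \<Rightarrow> 'a) set" where
  "cid T x = pclass T (\<lambda>_. x)"

lemma is_pclassE:
  assumes "is_pclass T c"
  obtains p where "pathin T p" "c = pclass T p"
  using assms by (auto simp: is_pclass_def)

lemma is_pclass_pclass [simp]: "pathin T p \<Longrightarrow> is_pclass T (pclass T p)"
  by (auto simp: is_pclass_def)

lemma cstart_pclass [simp]: "pathin T p \<Longrightarrow> cstart (pclass T p) = p 0"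
  by (metis cstart_def phom_ends phom_rep_pclass)

lemma cfinish_pclass [simp]: "pathin T p \<Longrightarrow> cfinish (pclass T p) = p 1"
  by (metis cfinish_def phom_ends phom_rep_pclass)

lemma mem_pclasses_iff: "c \<in> pclasses T x y \<longleftrightarrow> is_pclass T c \<and> cstart c = x \<and> cfinish c = y"
  by (auto simp: pclasses_def paths_between_def is_pclass_def image_iff)

text \<open>Rewriting classes of composite paths into the groupoid operations lets the groupoid laws
  below decide equalities of classes by simplification.\<close>

lemma pclass_pjoin:
  "pathin T p \<Longrightarrow> pathin T q \<Longrightarrow> p 1 = q 0 \<Longrightarrow> pclass T (p #\<^sub>p q) = cjoin T (pclass T p) (pclass T q)"
  by (simp add: cjoin_pclass paths_between_def)

lemma pclass_prev: "pathin T p \<Longrightarrow> pclass T (prev p) = cinv T (pclass T p)"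
  unfolding cinv_def by (metis pclass_eq phom_prev phom_rep_pclass)

lemmas pclass_decompose = pclass_pjoin pclass_prev

lemma is_pclass_cjoin [simp]:
  "is_pclass T a \<Longrightarrow> is_pclass T b \<Longrightarrow> cfinish a = cstart b \<Longrightarrow> is_pclass T (cjoin T a b)"
  and cstart_cjoin [simp]:
  "is_pclass T a \<Longrightarrow> is_pclass T b \<Longrightarrow> cfinish a = cstart b \<Longrightarrow> cstart (cjoin T a b) = cstart a"
  and cfinish_cjoin [simp]:
  "is_pclass T a \<Longrightarrow> is_pclass T b \<Longrightarrow> cfinish a = cstart b \<Longrightarrow> cfinish (cjoin T a b) = cfinish b"
  by (auto elim!: is_pclassE simp: pclass_pjoin[symmetric])

lemma cjoin_pclasses: "a \<in> pclasses T x y \<Longrightarrow> b \<in> pclasses T y z \<Longrightarrow> cjoin T a b \<in> pclasses T x z"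
  by (simp add: mem_pclasses_iff)

lemma fund_group_cjoin: "g \<in> fund_group T x \<Longrightarrow> h \<in> fund_group T x \<Longrightarrow> cjoin T g h \<in> fund_group T x"
  unfolding fund_group_def by (rule cjoin_pclasses)

lemma biset_bract: "b \<in> biset T f d s \<Longrightarrow> l \<in> fund_group T s \<Longrightarrow> bract T b l \<in> biset T f d s"
  unfolding biset_def fund_group_def bract_def by (rule cjoin_pclasses)

lemma is_pclass_cinv [simp]: "is_pclass T a \<Longrightarrow> is_pclass T (cinv T a)"
  and cstart_cinv [simp]: "is_pclass T a \<Longrightarrow> cstart (cinv T a) = cfinish a"
  and cfinish_cinv [simp]: "is_pclass T a \<Longrightarrow> cfinish (cinv T a) = cstart a"
  by (auto elim!: is_pclassE simp: pclass_prev[symmetric])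

lemma is_pclass_cid [simp]: "x \<in> topspace T \<Longrightarrow> is_pclass T (cid T x)"
  and cstart_cid [simp]: "x \<in> topspace T \<Longrightarrow> cstart (cid T x) = x"
  and cfinish_cid [simp]: "x \<in> topspace T \<Longrightarrow> cfinish (cid T x) = x"
  by (simp_all add: cid_def)

lemma cstart_in_topspace: "is_pclass T a \<Longrightarrow> cstart a \<in> topspace T"
  and cfinish_in_topspace: "is_pclass T a \<Longrightarrow> cfinish a \<in> topspace T"
  by (auto elim!: is_pclassE)

lemma cjoin_assoc [simp]:
  "is_pclass T a \<Longrightarrow> is_pclass T b \<Longrightarrow> is_pclass T c \<Longrightarrow> cfinish a = cstart b \<Longrightarrow> cfinish b = cstart c \<Longrightarrow>
   cjoin T (cjoin T a b) c = cjoin T a (cjoin T b c)"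
  by (elim is_pclassE, simp add: pclass_pjoin[symmetric], rule pclass_eq, rule phom_pjoin_assoc)
    (auto simp: paths_between_def)

lemma cjoin_right_inverse [simp]: "is_pclass T a \<Longrightarrow> cjoin T a (cinv T a) = cid T (cstart a)"
  by (elim is_pclassE, simp add: pclass_pjoin[symmetric] pclass_prev[symmetric] cid_def, rule pclass_eq, rule phom_pjoin_prev)
    (auto simp: paths_between_def)

lemma cjoin_left_inverse [simp]: "is_pclass T a \<Longrightarrow> cjoin T (cinv T a) a = cid T (cfinish a)"
  by (elim is_pclassE, simp add: pclass_pjoin[symmetric] pclass_prev[symmetric] cid_def, rule pclass_eq, rule phom_prev_pjoin)
    (auto simp: paths_between_def)

lemma cjoin_left_unit [simp]: "is_pclass T b \<Longrightarrow> x = cstart b \<Longrightarrow> cjoin T (cid T x) b = b"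
  by (elim is_pclassE, simp add: pclass_pjoin[symmetric] cid_def, rule pclass_eq, rule phom_const_pjoin)
    (auto simp: paths_between_def)

lemma cjoin_right_unit [simp]: "is_pclass T b \<Longrightarrow> x = cfinish b \<Longrightarrow> cjoin T b (cid T x) = b"
  by (elim is_pclassE, simp add: pclass_pjoin[symmetric] cid_def, rule pclass_eq, rule phom_pjoin_const)
    (auto simp: paths_between_def)

lemma cjoin_cinv_cancel [simp]:
  "is_pclass T a \<Longrightarrow> is_pclass T b \<Longrightarrow> cstart b = cstart a \<Longrightarrow> cjoin T a (cjoin T (cinv T a) b) = b"
  by (simp add: cstart_in_topspace flip: cjoin_assoc)

lemma cinv_cjoin_cancel [simp]:
  "is_pclass T a \<Longrightarrow> is_pclass T b \<Longrightarrow> cstart b = cfinish a \<Longrightarrow> cjoin T (cinv T a) (cjoin T a b) = b"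
  by (simp add: cfinish_in_topspace flip: cjoin_assoc)

lemma cinv_cjoin [simp]:
  assumes "is_pclass T a" "is_pclass T b" "cfinish a = cstart b"
  shows "cinv T (cjoin T a b) = cjoin T (cinv T b) (cinv T a)"
proof -
  obtain p q where p: "pathin T p" "a = pclass T p" and q: "pathin T q" "b = pclass T q"
    using assms(1,2) by (auto elim!: is_pclassE)
  then have "p 1 = q 0"
    using assms(3) by simp
  then show ?thesis
    using p q by (simp add: prev_pjoin flip: pclass_pjoin pclass_prev)
qed

section \<open>Lifting along fibrant maps\<close>

lemma fibrant_homotopy_lift:
  fixes H :: "real \<times> real \<Rightarrow> 'a"
  assumes fib: "fibrant Y X f"
    and H: "continuous_map (prod_topology (top_of_set {0..1}) (top_of_set {0..1})) X H"
    and p: "pathin Y p" and start: "\<And>u. u \<in> {0..1} \<Longrightarrow> f (p u) = H (u, 0)"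
  obtains G where "continuous_map (prod_topology (top_of_set {0..1}) (top_of_set {0..1})) Y G"
    "\<And>u t. u \<in> {0..1} \<Longrightarrow> t \<in> {0..1} \<Longrightarrow> f (G (u, t)) = H (u, t)"
    "\<And>u. u \<in> {0..1} \<Longrightarrow> G (u, 0) = p u"
proof -
  let ?Z = "top_of_set ({0..1::real} \<times> {0::real})"
  let ?I = "top_of_set {0..1::real}"
  have fst: "continuous_map ?Z ?I fst"
    by (auto simp: continuous_on_fst)
  have "continuous_map (prod_topology ?Z ?I) ?I (\<lambda>z. fst (fst z))"
    using continuous_map_compose[OF continuous_map_fst fst] by (simp only: o_def)
  then have "continuous_map (prod_topology ?Z ?I) (prod_topology ?I ?I) (\<lambda>z. (fst (fst z), snd z))"
    using continuous_map_snd by (rule continuous_map_pairedI)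
  from continuous_map_compose[OF this H]
  have H': "continuous_map (prod_topology ?Z ?I) X (\<lambda>p. H (fst (fst p), snd p))"
    by (simp add: o_def)
  have p': "continuous_map ?Z Y (\<lambda>z. p (fst z))"
    using continuous_map_compose[OF fst p[unfolded pathin_def]] by (simp add: o_def)
  have "HLP_wrt ?Z Y X f"
    using fib by (simp add: fibrant_def)
  moreover have "\<forall>z\<in>topspace ?Z. f (p (fst z)) = H (fst (fst (z, 0::real)), snd (z, 0::real))"
    using start by auto
  ultimately obtain G where G: "continuous_map (prod_topology ?Z ?I) Y G"
    and fG: "\<forall>z\<in>topspace ?Z. \<forall>t\<in>{0..1}. f (G (z, t)) = H (fst (fst (z, t)), snd (z, t))"
    and G0: "\<forall>z\<in>topspace ?Z. G (z, 0) = p (fst z)"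
    using H' p' unfolding HLP_wrt_def by blast
  have "continuous_map (prod_topology ?I ?I) (prod_topology ?Z ?I) (\<lambda>p. ((fst p, 0), snd p))"
    by (intro continuous_map_pairedI continuous_map_snd) (auto simp: continuous_on_fst intro!: continuous_intros)
  from continuous_map_compose[OF this G]
  have "continuous_map (prod_topology ?I ?I) Y (\<lambda>p. G ((fst p, 0), snd p))"
    by (simp add: o_def)
  then show ?thesis
    using fG G0 by (intro that[of "\<lambda>p. G ((fst p, 0), snd p)"]) auto
qed

lemma fibrant_path_lift:
  assumes fib: "fibrant Y X f" and \<alpha>: "pathin X \<alpha>" and w: "w \<in> topspace Y" "f w = \<alpha> 0"
  obtains \<rho> where "pathin Y \<rho>" "\<rho> 0 = w" "\<And>t. t \<in> {0..1} \<Longrightarrow> f (\<rho> t) = \<alpha> t"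
proof -
  let ?I = "top_of_set {0..1::real}"
  have "continuous_map (prod_topology ?I ?I) X (\<alpha> \<circ> snd)"
    using \<alpha> continuous_map_snd unfolding pathin_def by (rule continuous_map_compose[rotated])
  moreover have "pathin Y (\<lambda>_. w)" "\<And>u. f ((\<lambda>_. w) u) = (\<alpha> \<circ> snd) (u, 0)"
    using w by simp_all
  ultimately obtain G where G: "continuous_map (prod_topology ?I ?I) Y G"
    and fG: "\<And>u t. u \<in> {0..1} \<Longrightarrow> t \<in> {0..1} \<Longrightarrow> f (G (u, t)) = (\<alpha> \<circ> snd) (u, t)"
    and G0: "\<And>u. u \<in> {0..1} \<Longrightarrow> G (u, 0) = w"
    using fibrant_homotopy_lift[OF fib] by metis
  have "continuous_map ?I (prod_topology ?I ?I) (\<lambda>t. (0, t))"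
    by (intro continuous_map_pairedI) auto
  from continuous_map_compose[OF this G] have "pathin Y (\<lambda>t. G (0, t))"
    by (simp add: pathin_def o_def)
  then show ?thesis
    using fG G0 by (intro that[of "\<lambda>t. G (0, t)"]) auto
qed

lemma phom_square_boundary:
  assumes "continuous_map (prod_topology (top_of_set {0..1}) (top_of_set {0..1})) T G"
  shows "phom T ((\<lambda>u. G (u, 0)) #\<^sub>p (\<lambda>s. G (1, s))) ((\<lambda>s. G (0, s)) #\<^sub>p (\<lambda>u. G (u, 1)))"
proof -
  let ?S = "{0..1::real} \<times> {0..1::real}"
  have S: "convex ?S"
    by (simp add: convex_Times)
  have seg: "path_image (linepath a b) \<subseteq> ?S" if "a \<in> ?S" "b \<in> ?S" for a b
    using that S by (simp add: closed_segment_subset)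
  have "continuous_map (top_of_set ?S) T G"
    using assms by simp
  then have "phom T (G \<circ> (linepath (0, 0) (1, 0) +++ linepath (1, 0) (1, 1)))
                (G \<circ> (linepath (0, 0) (0, 1) +++ linepath (0, 1) (1, 1)))"
    by (rule phom_compose_convex[OF S]; (intro path_join_imp path_linepath subset_path_image_join seg)?; simp)
  moreover have "linepath (a::real, b::real) (c, d) u = ((1 - u) * a + u * c, (1 - u) * b + u * d)" for a b c d u
    by (simp add: linepath_def)
  ultimately show ?thesis
    by (elim phom_eq_on_cong) (auto simp: comp_joinpaths pjoin_def)
qed

lemma phom_square_bottom:
  assumes G: "continuous_map (prod_topology (top_of_set {0..1}) (top_of_set {0..1})) T G"
  shows "phom T (\<lambda>u. G (u, 0)) (((\<lambda>s. G (0, s)) #\<^sub>p (\<lambda>u. G (u, 1))) #\<^sub>p prev (\<lambda>s. G (1, s)))"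
proof -
  let ?I = "top_of_set {0..1::real}"
  have "continuous_map ?I (prod_topology ?I ?I) (\<lambda>s. (c, s))"
    "continuous_map ?I (prod_topology ?I ?I) (\<lambda>s. (s, c))" if "c \<in> {0..1}" for c
    using that by (intro continuous_map_pairedI; simp)+
  from this[THEN continuous_map_compose, OF _ G]
  have side: "pathin T (\<lambda>s. G (c, s))" "pathin T (\<lambda>s. G (s, c))" if "c \<in> {0..1}" for c
    using that unfolding pathin_def o_def by auto
  define h where "h = (\<lambda>u. G (u, 0))"
  define a where "a = (\<lambda>s. G (0, s))"
  define b where "b = (\<lambda>s. G (1, s))"
  define c where "c = (\<lambda>u. G (u, 1))"
  have h: "h \<in> paths_between T (G (0, 0)) (G (1, 0))" and b: "b \<in> paths_between T (G (1, 0)) (G (1, 1))"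
    using side by (auto simp: paths_between_def h_def b_def)
  have "phom T h (h #\<^sub>p (\<lambda>_. G (1, 0)))"
    using phom_pjoin_const[OF h] by (rule phom_sym)
  also have "phom T \<dots> (h #\<^sub>p (b #\<^sub>p prev b))"
    using h b phom_sym[OF phom_pjoin_prev[OF b]] by (intro phom_pjoin_right) (auto simp: paths_between_def)
  also have "phom T \<dots> ((h #\<^sub>p b) #\<^sub>p prev b)"
    using phom_pjoin_assoc[OF h b paths_between_prev[OF b]] by (rule phom_sym)
  also have "phom T \<dots> ((a #\<^sub>p c) #\<^sub>p prev b)"
    using phom_square_boundary[OF G] b by (intro phom_pjoin_left) (auto simp: h_def a_def b_def c_def paths_between_def)
  finally show ?thesis
    unfolding h_def a_def b_def c_def .
qed

text \<open>Lifting the null-homotopy of \<open>f \<circ> h\<close> and reading off the other three sides of the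
  lifted square deforms \<open>h\<close> into the fibre.\<close>

lemma fibrant_phom_into_fibre:
  assumes fib: "fibrant Y X f" and h: "h \<in> paths_between Y e1 e2" and null: "phom X (f \<circ> h) (\<lambda>_. x)"
  obtains \<sigma> where "\<sigma> \<in> paths_between Y e1 e2" "\<And>t. t \<in> {0..1} \<Longrightarrow> f (\<sigma> t) = x" "phom Y h \<sigma>"
proof -
  let ?I = "top_of_set {0..1::real}"
  obtain K where K: "continuous_map (prod_topology ?I ?I) X K"
    and K0: "\<And>s. K (0, s) = f (h s)" and K1: "\<And>s. K (1, s) = x"
    and Kends: "\<And>t. t \<in> {0..1} \<Longrightarrow> K (t, 0) = x \<and> K (t, 1) = x"
    using null phom_ends[OF null] unfolding phom_def homotopic_with_def by auto
  have "continuous_map (prod_topology ?I ?I) (prod_topology ?I ?I) (\<lambda>z. (snd z, fst z))"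
    by (intro continuous_map_pairedI continuous_map_fst continuous_map_snd)
  from continuous_map_compose[OF this K]
  have "continuous_map (prod_topology ?I ?I) X (\<lambda>z. K (snd z, fst z))"
    by (simp add: o_def)
  then obtain G where G: "continuous_map (prod_topology ?I ?I) Y G"
    and fG: "\<And>u t. u \<in> {0..1} \<Longrightarrow> t \<in> {0..1} \<Longrightarrow> f (G (u, t)) = K (t, u)"
    and G0: "\<And>u. u \<in> {0..1} \<Longrightarrow> G (u, 0) = h u"
    using fibrant_homotopy_lift[OF fib _ , of "\<lambda>z. K (snd z, fst z)" h] h K0
    by (auto simp: paths_between_def)
  define \<sigma> where "\<sigma> = ((\<lambda>s. G (0, s)) #\<^sub>p (\<lambda>u. G (u, 1))) #\<^sub>p prev (\<lambda>s. G (1, s))"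
  have "phom Y h \<sigma>"
    unfolding \<sigma>_def using phom_square_bottom[OF G] by (rule phom_eq_on_cong) (simp_all add: G0)
  moreover have "\<sigma> \<in> paths_between Y e1 e2"
    using phom_paths_between[OF calculation h] .
  moreover have "f (\<sigma> t) = x" if "t \<in> {0..1}" for t
    using that fG Kends K1 by (auto simp: \<sigma>_def pjoin_def prev_def)
  ultimately show ?thesis
    using that by blast
qed

lemma fibrant_lift_difference:
  assumes fib: "fibrant Y X f"
    and \<rho>1: "\<rho>1 \<in> paths_between Y w e1" and \<rho>2: "\<rho>2 \<in> paths_between Y w e2"
    and hom: "phom X (f \<circ> \<rho>1) (f \<circ> \<rho>2)"
  obtains \<sigma> where "\<sigma> \<in> paths_between Y e1 e2" "\<And>t. t \<in> {0..1} \<Longrightarrow> f (\<sigma> t) = f e1"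
    "phom Y (\<rho>1 #\<^sub>p \<sigma>) \<rho>2"
proof -
  have cf: "continuous_map Y X f"
    using fib by (simp add: fibrant_def)
  have f\<rho>1: "f \<circ> \<rho>1 \<in> paths_between X (f w) (f e1)"
    using \<rho>1 cf by blast
  have "phom X (f \<circ> (prev \<rho>1 #\<^sub>p \<rho>2)) (prev (f \<circ> \<rho>1) #\<^sub>p (f \<circ> \<rho>1))"
    using phom_sym[OF hom] f\<rho>1 \<rho>2 by (auto simp: paths_between_def intro: phom_pjoin_right)
  also have "phom X \<dots> (\<lambda>_. f e1)"
    using phom_prev_pjoin[OF f\<rho>1] .
  finally obtain \<sigma> where \<sigma>: "\<sigma> \<in> paths_between Y e1 e2" and f\<sigma>: "\<And>t. t \<in> {0..1} \<Longrightarrow> f (\<sigma> t) = f e1"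
    and h\<sigma>: "phom Y (prev \<rho>1 #\<^sub>p \<rho>2) \<sigma>"
    using fibrant_phom_into_fibre[OF fib paths_between_pjoin[OF paths_between_prev[OF \<rho>1] \<rho>2]] by blast
  have "phom Y (\<rho>1 #\<^sub>p \<sigma>) (\<rho>1 #\<^sub>p (prev \<rho>1 #\<^sub>p \<rho>2))"
    using phom_sym[OF h\<sigma>] \<rho>1 \<sigma> by (intro phom_pjoin_right) (auto simp: paths_between_def)
  also have "phom Y \<dots> ((\<rho>1 #\<^sub>p prev \<rho>1) #\<^sub>p \<rho>2)"
    using phom_pjoin_assoc[OF \<rho>1 paths_between_prev[OF \<rho>1] \<rho>2] by (rule phom_sym)
  also have "phom Y \<dots> ((\<lambda>_. w) #\<^sub>p \<rho>2)"
    using phom_pjoin_prev[OF \<rho>1] \<rho>1 \<rho>2 by (intro phom_pjoin_left) (auto simp: paths_between_def)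
  also have "phom Y \<dots> \<rho>2"
    using phom_const_pjoin[OF \<rho>2] .
  finally show ?thesis
    using \<sigma> f\<sigma> that by blast
qed

section \<open>Tensor products of sets with group actions\<close>

lemma equiv_tensor_rel: "equiv (A \<times> C) (tensor_rel A C K ra la)"
proof (rule equivI)
  show "sym (tensor_rel A C K ra la)"
    using sympD[OF symp_rtranclp_symclp]
    by (auto simp: sym_def tensor_rel_def symclp_pointfree[symmetric])
qed (auto simp: refl_on_def trans_def tensor_rel_def intro: rtranclp_trans)

lemma tensor_elt_eq:
  assumes "a \<in> A" "c \<in> C" "k \<in> K" "ra a k \<in> A" "la k c \<in> C"
  shows "tensor_elt A C K ra la (ra a k) c = tensor_elt A C K ra la a (la k c)"
proof -
  have "tensor_gen A C K ra la (ra a k, c) (a, la k c)"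
    using assms by (auto simp: tensor_gen_def)
  then have "((ra a k, c), (a, la k c)) \<in> tensor_rel A C K ra la"
    using assms by (auto simp: tensor_rel_def)
  then show ?thesis
    unfolding tensor_elt_def by (rule equiv_class_eq[OF equiv_tensor_rel])
qed

lemma tensor_rel_respects:
  assumes balanced: "\<And>a c k. a \<in> A \<Longrightarrow> c \<in> C \<Longrightarrow> k \<in> K \<Longrightarrow> ra a k \<in> A \<Longrightarrow> la k c \<in> C \<Longrightarrow>
                       \<phi> (ra a k) c = \<phi> a (la k c)"
    and "(x, y) \<in> tensor_rel A C K ra la"
  shows "case_prod \<phi> x = case_prod \<phi> y"
proof -
  have "(sup (tensor_gen A C K ra la) (tensor_gen A C K ra la)\<inverse>\<inverse>)\<^sup>*\<^sup>* x y"
    using assms(2) by (simp add: tensor_rel_def)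
  then show ?thesis
  proof (induction rule: rtranclp_induct)
    case (step y z)
    then show ?case
      using balanced by (auto simp: tensor_gen_def)
  qed simp
qed

text \<open>\<open>tensor_lift\<close> evaluates at an arbitrary representative, so it is only meaningful for
  balanced maps.\<close>

definition tensor_lift :: "('a \<Rightarrow> 'c \<Rightarrow> 'd) \<Rightarrow> ('a \<times> 'c) set \<Rightarrow> 'd" where
  "tensor_lift \<phi> T = case_prod \<phi> (SOME x. x \<in> T)"

lemma tensor_lift_tensor_elt:
  assumes balanced: "\<And>a c k. a \<in> A \<Longrightarrow> c \<in> C \<Longrightarrow> k \<in> K \<Longrightarrow> ra a k \<in> A \<Longrightarrow> la k c \<in> C \<Longrightarrow>
                       \<phi> (ra a k) c = \<phi> a (la k c)"
    and "a \<in> A" "c \<in> C"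
  shows "tensor_lift \<phi> (tensor_elt A C K ra la a c) = \<phi> a c"
proof -
  let ?T = "tensor_elt A C K ra la a c"
  have "(a, c) \<in> ?T"
    using assms(2,3) by (simp add: tensor_elt_def tensor_rel_def)
  then have "((a, c), SOME x. x \<in> ?T) \<in> tensor_rel A C K ra la"
    using someI[of "\<lambda>x. x \<in> ?T"] by (simp add: tensor_elt_def)
  from tensor_rel_respects[OF balanced this] show ?thesis
    by (simp add: tensor_lift_def)
qed

section \<open>The decomposition of the biset\<close>

locale biset_decomposition =
  fixes Y :: "'b topology" and X :: "'a topology" and f :: "'b \<Rightarrow> 'a"
    and dag :: 'b and st :: 'a and U' :: "'a set" and st' :: 'a
    and bp :: "'b set \<Rightarrow> 'b" and gam :: "'b set \<Rightarrow> real \<Rightarrow> 'b" and gst :: "real \<Rightarrow> 'a"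
  assumes fib: "fibrant Y X f" and dag: "dag \<in> topspace Y"
    and U': "U' \<subseteq> topspace X" "st' \<in> U'"
    and bp: "\<And>C. C \<in> comps Y f U' \<Longrightarrow> bp C \<in> C"
    and gam: "\<And>C. C \<in> comps Y f U' \<Longrightarrow> gam C \<in> paths_between Y dag (bp C)"
    and gst: "gst \<in> paths_between X st st'"
begin

abbreviation "X' \<equiv> subtopology X U'"

abbreviation "V \<equiv> {w \<in> topspace Y. f w \<in> U'}"

lemma continuous_f: "continuous_map Y X f"
  using fib by (simp add: fibrant_def)

lemma pathin_f [simp]: "pathin Y p \<Longrightarrow> pathin X (f \<circ> p)"
  using continuous_f by (simp add: pathin_compose)

lemma component_subset: "C \<in> comps Y f U' \<Longrightarrow> C \<subseteq> V"
  unfolding comps_def using path_components_of_subset by fastforce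

lemma continuous_f_component: "C \<in> comps Y f U' \<Longrightarrow> continuous_map (subtopology Y C) X' f"
  using continuous_f component_subset
  by (fastforce simp: continuous_map_in_subtopology continuous_map_from_subtopology)

lemma pathin_component:
  assumes C: "C \<in> comps Y f U'" and \<sigma>: "pathin Y \<sigma>" "\<And>t. t \<in> {0..1} \<Longrightarrow> f (\<sigma> t) \<in> U'"
    and start: "\<sigma> 0 \<in> C"
  shows "pathin (subtopology Y C) \<sigma>"
proof -
  have "pathin (subtopology Y V) \<sigma>"
    using \<sigma> pathin_in_topspace[OF \<sigma>(1)] by (auto simp: pathin_subtopology)
  then have "path_connectedin (subtopology Y V) (\<sigma> ` {0..1})"
    by (rule path_connectedin_path_image)
  moreover have "\<not> disjnt C (\<sigma> ` {0..1})"
    using start by (force simp: disjnt_def)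
  ultimately have "\<sigma> ` {0..1} \<subseteq> C"
    using C unfolding comps_def by (metis path_components_of_maximal)
  then show ?thesis
    using \<sigma> by (auto simp: pathin_subtopology)
qed

lemma component_unique: "C \<in> comps Y f U' \<Longrightarrow> C' \<in> comps Y f U' \<Longrightarrow> x \<in> C \<Longrightarrow> x \<in> C' \<Longrightarrow> C = C'"
  unfolding comps_def using path_components_of_overlap by blast

lemma component_path:
  assumes C: "C \<in> comps Y f U'" and "x \<in> C" "y \<in> C"
  obtains \<delta> where "\<delta> \<in> paths_between (subtopology Y C) x y"
proof -
  have "path_connectedin (subtopology Y V) C"
    using C unfolding comps_def by (rule path_connectedin_path_components_of)
  then obtain \<delta> where "pathin (subtopology Y V) \<delta>" "\<delta> \<in> {0..1} \<rightarrow> C" "\<delta> 0 = x" "\<delta> 1 = y"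
    using assms unfolding path_connectedin by blast
  then show ?thesis
    using that by (auto simp: paths_between_def pathin_subtopology)
qed

lemma in_component: "w \<in> topspace Y \<Longrightarrow> f w \<in> U' \<Longrightarrow> \<exists>C\<in>comps Y f U'. w \<in> C"
  unfolding comps_def using Union_path_components_of[of "subtopology Y V"] by auto

definition phi :: "'b set \<Rightarrow> (real \<Rightarrow> 'b) set \<Rightarrow> (real \<Rightarrow> 'a) set \<Rightarrow> (real \<Rightarrow> 'a) set" where
  "phi C g b = blact X f g (bminus X f (gam C) gst b)"

lemma phi_pclass:
  assumes C: "C \<in> comps Y f U'"
    and p: "p \<in> paths_between Y dag dag" and q: "q \<in> paths_between X' (f (bp C)) st'"
  shows "phi C (pclass Y p) (pclass X' q) = pclass X ((f \<circ> p) #\<^sub>p (((f \<circ> gam C) #\<^sub>p q) #\<^sub>p prev gst))"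
proof -
  have \<gamma>: "f \<circ> gam C \<in> paths_between X (f dag) (f (bp C))"
    using gam[OF C] continuous_f by blast
  have "bminus X f (gam C) gst (pclass X' q) = pclass X (((f \<circ> gam C) #\<^sub>p q) #\<^sub>p prev gst)"
    by (rule bminus_pclass[OF q \<gamma> gst])
  moreover have "((f \<circ> gam C) #\<^sub>p q) #\<^sub>p prev gst \<in> paths_between X (f dag) st"
    using \<gamma> paths_between_subtopologyD[OF q] gst by blast
  ultimately show ?thesis
    unfolding phi_def using blact_pclass[OF p continuous_f] by simp
qed

lemma phi_balanced:
  assumes C: "C \<in> comps Y f U'" and g: "g \<in> fund_group Y dag"
    and k: "k \<in> fund_group (subtopology Y C) (bp C)" and b: "b \<in> biset X' f (bp C) st'"
  shows "phi C (cjoin Y g (cconj Y (gam C) k)) b = phi C g (blact X' f k b)"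
proof -
  obtain p where p: "p \<in> paths_between Y dag dag" and gp: "g = pclass Y p"
    using g unfolding fund_group_def by (rule pclassesE)
  obtain \<kappa> where \<kappa>: "\<kappa> \<in> paths_between (subtopology Y C) (bp C) (bp C)"
    and k\<kappa>: "k = pclass (subtopology Y C) \<kappa>"
    using k unfolding fund_group_def by (rule pclassesE)
  obtain q where q: "q \<in> paths_between X' (f (bp C)) st'" and bq: "b = pclass X' q"
    using b unfolding biset_def by (rule pclassesE)
  have \<gamma>: "gam C \<in> paths_between Y dag (bp C)"
    using gam[OF C] .
  have conj: "(gam C #\<^sub>p \<kappa>) #\<^sub>p prev (gam C) \<in> paths_between Y dag dag"
    using \<gamma> paths_between_subtopologyD[OF \<kappa>] by blast
  have "cconj Y (gam C) k = pclass Y ((gam C #\<^sub>p \<kappa>) #\<^sub>p prev (gam C))"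
    unfolding k\<kappa> using \<kappa> \<gamma> by (rule cconj_pclass)
  then have "phi C (cjoin Y g (cconj Y (gam C) k)) b =
      pclass X ((f \<circ> (p #\<^sub>p ((gam C #\<^sub>p \<kappa>) #\<^sub>p prev (gam C)))) #\<^sub>p (((f \<circ> gam C) #\<^sub>p q) #\<^sub>p prev gst))"
    using cjoin_pclass[OF p conj] phi_pclass[OF C paths_between_pjoin[OF p conj] q] gp bq by simp
  moreover have "blact X' f k b = pclass X' ((f \<circ> \<kappa>) #\<^sub>p q)"
    unfolding k\<kappa> bq using \<kappa> continuous_f_component[OF C] q by (rule blact_pclass)
  then have "phi C g (blact X' f k b) = pclass X ((f \<circ> p) #\<^sub>p (((f \<circ> gam C) #\<^sub>p ((f \<circ> \<kappa>) #\<^sub>p q)) #\<^sub>p prev gst))"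
    using phi_pclass[OF C p paths_between_pjoin[OF paths_between_compose[OF \<kappa> continuous_f_component[OF C]] q]] gp
    by simp
  ultimately show ?thesis
    using p q \<kappa> \<gamma> gst by (simp add: pclass_decompose paths_between_def pathin_subtopology)
qed

lemma phi_path:
  assumes C: "C \<in> comps Y f U'"
    and p: "p \<in> paths_between Y dag dag" and q: "q \<in> paths_between X' (f (bp C)) st'"
  shows "(f \<circ> p) #\<^sub>p (((f \<circ> gam C) #\<^sub>p q) #\<^sub>p prev gst) \<in> paths_between X (f dag) st"
  using paths_between_compose[OF p continuous_f] paths_between_compose[OF gam[OF C] continuous_f]
    paths_between_subtopologyD[OF q] gst
  by blast

lemma phi_in_biset:
  assumes C: "C \<in> comps Y f U'" and g: "g \<in> fund_group Y dag" and b: "b \<in> biset X' f (bp C) st'"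
  shows "phi C g b \<in> biset X f dag st"
proof -
  obtain p where p: "p \<in> paths_between Y dag dag" and gp: "g = pclass Y p"
    using g unfolding fund_group_def by (rule pclassesE)
  obtain q where q: "q \<in> paths_between X' (f (bp C)) st'" and bq: "b = pclass X' q"
    using b unfolding biset_def by (rule pclassesE)
  show ?thesis
    unfolding gp bq phi_pclass[OF C p q] biset_def by (rule pclassesI[OF phi_path[OF C p q]])
qed

lemma phi_left_equivariant:
  assumes C: "C \<in> comps Y f U'" and g: "g \<in> fund_group Y dag" and b: "b \<in> biset X' f (bp C) st'"
    and h: "h \<in> fund_group Y dag"
  shows "phi C (cjoin Y h g) b = blact X f h (phi C g b)"
proof -
  obtain p where p: "p \<in> paths_between Y dag dag" and gp: "g = pclass Y p"
    using g unfolding fund_group_def by (rule pclassesE)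
  obtain p' where p': "p' \<in> paths_between Y dag dag" and hp': "h = pclass Y p'"
    using h unfolding fund_group_def by (rule pclassesE)
  obtain q where q: "q \<in> paths_between X' (f (bp C)) st'" and bq: "b = pclass X' q"
    using b unfolding biset_def by (rule pclassesE)
  have "phi C (cjoin Y h g) b = pclass X ((f \<circ> (p' #\<^sub>p p)) #\<^sub>p (((f \<circ> gam C) #\<^sub>p q) #\<^sub>p prev gst))"
    unfolding gp hp' bq cjoin_pclass[OF p' p] by (rule phi_pclass[OF C paths_between_pjoin[OF p' p] q])
  also have "\<dots> = blact X f h (pclass X ((f \<circ> p) #\<^sub>p (((f \<circ> gam C) #\<^sub>p q) #\<^sub>p prev gst)))"
    unfolding hp' blact_pclass[OF p' continuous_f phi_path[OF C p q]]
    using p p' q gam[OF C] gst by (simp add: pclass_decompose paths_between_def pathin_subtopology)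
  finally show ?thesis
    unfolding gp bq phi_pclass[OF C p q] .
qed

lemma phi_right_equivariant:
  assumes C: "C \<in> comps Y f U'" and g: "g \<in> fund_group Y dag" and b: "b \<in> biset X' f (bp C) st'"
    and l: "l \<in> fund_group X' st'"
  shows "phi C g (bract X' b l) = bract X (phi C g b) (cconj X gst l)"
proof -
  obtain p where p: "p \<in> paths_between Y dag dag" and gp: "g = pclass Y p"
    using g unfolding fund_group_def by (rule pclassesE)
  obtain q where q: "q \<in> paths_between X' (f (bp C)) st'" and bq: "b = pclass X' q"
    using b unfolding biset_def by (rule pclassesE)
  obtain m where m: "m \<in> paths_between X' st' st'" and lm: "l = pclass X' m"
    using l unfolding fund_group_def by (rule pclassesE)
  have "phi C g (bract X' b l) = pclass X ((f \<circ> p) #\<^sub>p (((f \<circ> gam C) #\<^sub>p (q #\<^sub>p m)) #\<^sub>p prev gst))"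
    unfolding gp bq lm bract_def cjoin_pclass[OF q m] by (rule phi_pclass[OF C p paths_between_pjoin[OF q m]])
  moreover have "cconj X gst l = pclass X ((gst #\<^sub>p m) #\<^sub>p prev gst)"
    unfolding lm using m gst by (rule cconj_pclass)
  ultimately show ?thesis
    unfolding gp bq phi_pclass[OF C p q] bract_def
    using p q m gam[OF C] gst by (simp add: pclass_decompose paths_between_def pathin_subtopology)
qed

abbreviation tensor :: "'b set \<Rightarrow> (real \<Rightarrow> 'b) set \<Rightarrow> (real \<Rightarrow> 'a) set \<Rightarrow> ((real \<Rightarrow> 'b) set \<times> (real \<Rightarrow> 'a) set) set"
  where "tensor C g b \<equiv> factor_elt Y X f dag U' st' C (bp C) (gam C) g b"

definition lifted_elt :: "'b set \<Rightarrow> (real \<Rightarrow> 'b) \<Rightarrow> (real \<Rightarrow> 'b) \<Rightarrow> ((real \<Rightarrow> 'b) set \<times> (real \<Rightarrow> 'a) set) set"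
  where "lifted_elt C \<rho> \<delta> = tensor C (pclass Y ((\<rho> #\<^sub>p prev \<delta>) #\<^sub>p prev (gam C))) (pclass X' (f \<circ> \<delta>))"

lemma lifted_elt_indep_path:
  assumes C: "C \<in> comps Y f U'" and \<rho>: "\<rho> \<in> paths_between Y dag e" and e: "f e = st'"
    and \<delta>: "\<delta> \<in> paths_between (subtopology Y C) (bp C) e"
    and \<delta>': "\<delta>' \<in> paths_between (subtopology Y C) (bp C) e"
  shows "lifted_elt C \<rho> \<delta> = lifted_elt C \<rho> \<delta>'"
proof -
  let ?YC = "subtopology Y C"
  have \<gamma>: "gam C \<in> paths_between Y dag (bp C)"
    by (rule gam[OF C])
  have \<delta>Y: "\<delta> \<in> paths_between Y (bp C) e" "\<delta>' \<in> paths_between Y (bp C) e"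
    using \<delta> \<delta>' by (auto intro: paths_between_subtopologyD)
  define a where "a = (\<rho> #\<^sub>p prev \<delta>) #\<^sub>p prev (gam C)"
  define \<kappa> where "\<kappa> = \<delta> #\<^sub>p prev \<delta>'"
  have a: "a \<in> paths_between Y dag dag"
    unfolding a_def using \<rho> \<delta>Y \<gamma> by blast
  have \<kappa>: "\<kappa> \<in> paths_between ?YC (bp C) (bp C)"
    unfolding \<kappa>_def using \<delta> \<delta>' by blast
  have f\<delta>: "f \<circ> \<delta> \<in> paths_between X' (f (bp C)) st'" "f \<circ> \<delta>' \<in> paths_between X' (f (bp C)) st'"
    using \<delta> \<delta>' continuous_f_component[OF C] e by (metis paths_between_compose)+
  have "cconj Y (gam C) (pclass ?YC \<kappa>) = pclass Y ((gam C #\<^sub>p \<kappa>) #\<^sub>p prev (gam C))"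
    using \<kappa> \<gamma> by (rule cconj_pclass)
  then have left: "cjoin Y (pclass Y a) (cconj Y (gam C) (pclass ?YC \<kappa>)) =
      pclass Y ((\<rho> #\<^sub>p prev \<delta>') #\<^sub>p prev (gam C))"
    using a \<kappa> \<rho> \<delta>Y \<gamma> unfolding a_def \<kappa>_def
    by (simp add: pclass_decompose paths_between_def pathin_subtopology)
  have right: "blact X' f (pclass ?YC \<kappa>) (pclass X' (f \<circ> \<delta>')) = pclass X' (f \<circ> \<delta>)"
    unfolding blact_pclass[OF \<kappa> continuous_f_component[OF C] f\<delta>(2)]
    using f\<delta> \<delta> \<delta>' unfolding \<kappa>_def by (simp add: pclass_decompose paths_between_def)
  have "tensor C (pclass Y ((\<rho> #\<^sub>p prev \<delta>') #\<^sub>p prev (gam C))) (pclass X' (f \<circ> \<delta>')) =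
        tensor C (pclass Y a) (pclass X' (f \<circ> \<delta>))"
    unfolding left[symmetric] right[symmetric] factor_elt_def
  proof (rule tensor_elt_eq)
    show "cjoin Y (pclass Y a) (cconj Y (gam C) (pclass ?YC \<kappa>)) \<in> fund_group Y dag"
      unfolding left fund_group_def using \<rho> \<delta>Y \<gamma> by (intro pclassesI) blast
    show "blact X' f (pclass ?YC \<kappa>) (pclass X' (f \<circ> \<delta>')) \<in> biset X' f (bp C) st'"
      unfolding right biset_def using f\<delta>(1) by (rule pclassesI)
  qed (use a \<kappa> f\<delta> in \<open>auto simp: fund_group_def biset_def intro: pclassesI\<close>)
  then show ?thesis
    unfolding lifted_elt_def a_def by simp
qed

lemma lifted_elt_fibre_path:
  assumes C: "C \<in> comps Y f U'" and \<rho>: "\<rho> \<in> paths_between Y dag e"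
    and \<delta>: "\<delta> \<in> paths_between (subtopology Y C) (bp C) e"
    and \<sigma>: "\<sigma> \<in> paths_between (subtopology Y C) e e'" and f\<sigma>: "\<And>t. t \<in> {0..1} \<Longrightarrow> f (\<sigma> t) = st'"
    and \<rho>': "phom Y \<rho>' (\<rho> #\<^sub>p \<sigma>)"
  shows "lifted_elt C \<rho>' (\<delta> #\<^sub>p \<sigma>) = lifted_elt C \<rho> \<delta>"
proof -
  have \<delta>\<sigma>Y: "\<delta> \<in> paths_between Y (bp C) e" "\<sigma> \<in> paths_between Y e e'"
    using \<delta> \<sigma> by (auto intro: paths_between_subtopologyD)
  have \<rho>\<sigma>: "\<rho> #\<^sub>p \<sigma> \<in> paths_between Y dag e'"
    using \<rho> \<delta>\<sigma>Y by blast
  have "pclass Y \<rho>' = cjoin Y (pclass Y \<rho>) (pclass Y \<sigma>)"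
    using pclass_eq[OF \<rho>'] cjoin_pclass[OF \<rho> \<delta>\<sigma>Y(2)] by simp
  moreover have "\<rho>' \<in> paths_between Y dag e'"
    using phom_paths_between[OF phom_sym[OF \<rho>'] \<rho>\<sigma>] .
  ultimately have "pclass Y ((\<rho>' #\<^sub>p prev (\<delta> #\<^sub>p \<sigma>)) #\<^sub>p prev (gam C)) = pclass Y ((\<rho> #\<^sub>p prev \<delta>) #\<^sub>p prev (gam C))"
    using \<rho> \<delta>\<sigma>Y gam[OF C] by (simp add: pclass_decompose paths_between_def)
  moreover have "pclass X' (f \<circ> \<sigma>) = cid X' st'"
    unfolding cid_def using U' f\<sigma> by (intro pclass_eq_on) auto
  then have "pclass X' (f \<circ> (\<delta> #\<^sub>p \<sigma>)) = pclass X' (f \<circ> \<delta>)"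
    using paths_between_compose[OF \<delta> continuous_f_component[OF C]]
      paths_between_compose[OF \<sigma> continuous_f_component[OF C]] f\<sigma>[of 0] \<sigma>
    by (simp add: pclass_decompose paths_between_def)
  ultimately show ?thesis
    unfolding lifted_elt_def by simp
qed

lemma lifted_elt_canonical:
  assumes C: "C \<in> comps Y f U'" and p: "p \<in> paths_between Y dag dag"
    and q: "q \<in> paths_between X' (f (bp C)) st'"
    and \<beta>: "\<beta> \<in> paths_between (subtopology Y C) (bp C) e" and f\<beta>: "\<And>t. t \<in> {0..1} \<Longrightarrow> f (\<beta> t) = q t"
  shows "lifted_elt C (p #\<^sub>p (gam C #\<^sub>p \<beta>)) \<beta> = tensor C (pclass Y p) (pclass X' q)"
proof -
  have "pclass Y (((p #\<^sub>p (gam C #\<^sub>p \<beta>)) #\<^sub>p prev \<beta>) #\<^sub>p prev (gam C)) = pclass Y p"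
    using p gam[OF C] paths_between_subtopologyD[OF \<beta>]
    by (simp add: pclass_decompose paths_between_def)
  moreover have "pclass X' (f \<circ> \<beta>) = pclass X' q"
    using q f\<beta> by (intro pclass_eq_on) (auto simp: paths_between_def)
  ultimately show ?thesis
    unfolding lifted_elt_def by simp
qed

lemma lift_into_component:
  assumes C: "C \<in> comps Y f U'" and q: "q \<in> paths_between X' (f (bp C)) st'"
  obtains \<beta> e where "\<beta> \<in> paths_between (subtopology Y C) (bp C) e"
    "\<And>t. t \<in> {0..1} \<Longrightarrow> f (\<beta> t) = q t" "e \<in> C" "f e = st'"
proof -
  have "bp C \<in> topspace Y"
    using bp[OF C] component_subset[OF C] by auto
  moreover have "pathin X q" "q 0 = f (bp C)"
    using q by (auto simp: paths_between_def pathin_subtopology)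
  ultimately obtain \<beta> where \<beta>: "pathin Y \<beta>" "\<beta> 0 = bp C" and f\<beta>: "\<And>t. t \<in> {0..1} \<Longrightarrow> f (\<beta> t) = q t"
    using fibrant_path_lift[OF fib] by metis
  have "pathin (subtopology Y C) \<beta>"
    using \<beta> f\<beta> q bp[OF C] by (intro pathin_component[OF C]) (auto simp: paths_between_def pathin_subtopology)
  moreover from this have "\<beta> 1 \<in> C"
    using pathin_in_topspace[of "subtopology Y C" \<beta> 1] by simp
  moreover have "f (\<beta> 1) = st'"
    using f\<beta>[of 1] q by (simp add: paths_between_def)
  ultimately show ?thesis
    using that[of \<beta> "\<beta> 1"] \<beta>(2) f\<beta> by (simp add: paths_between_def)
qed

lemma phi_lift_of_representatives:
  assumes C: "C \<in> comps Y f U'"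
    and p: "p \<in> paths_between Y dag dag" and q: "q \<in> paths_between X' (f (bp C)) st'"
    and \<beta>: "\<beta> \<in> paths_between (subtopology Y C) (bp C) e" and f\<beta>: "\<And>t. t \<in> {0..1} \<Longrightarrow> f (\<beta> t) = q t"
  shows "pclass X (f \<circ> (p #\<^sub>p (gam C #\<^sub>p \<beta>))) = cjoin X (phi C (pclass Y p) (pclass X' q)) (pclass X gst)"
proof -
  have "pclass X (f \<circ> \<beta>) = pclass X q"
    using q f\<beta> by (intro pclass_eq_on) (auto simp: paths_between_def pathin_subtopology)
  then show ?thesis
    unfolding phi_pclass[OF C p q] using p q gam[OF C] paths_between_subtopologyD[OF \<beta>] gst
    by (simp add: pclass_decompose paths_between_def pathin_subtopology)
qed

text \<open>Compare \<open>\<rho>\<close> with the lift \<open>p (gam C) \<beta>\<close> built from representatives of \<open>g\<close> and \<open>b\<close>: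
  both cover homotopic paths, so they differ by a path in the fibre over \<open>st'\<close>, which
  \<open>lifted_elt\<close> does not see.\<close>

lemma lift_determines_elt:
  assumes C: "C \<in> comps Y f U'" and g: "g \<in> fund_group Y dag" and b: "b \<in> biset X' f (bp C) st'"
    and \<rho>: "\<rho> \<in> paths_between Y dag e" and f\<rho>: "pclass X (f \<circ> \<rho>) = cjoin X (phi C g b) (pclass X gst)"
  shows "e \<in> C" "\<And>\<delta>. \<delta> \<in> paths_between (subtopology Y C) (bp C) e \<Longrightarrow> lifted_elt C \<rho> \<delta> = tensor C g b"
proof -
  obtain p where p: "p \<in> paths_between Y dag dag" and gp: "g = pclass Y p"
    using g unfolding fund_group_def by (rule pclassesE)
  obtain q where q: "q \<in> paths_between X' (f (bp C)) st'" and bq: "b = pclass X' q"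
    using b unfolding biset_def by (rule pclassesE)
  obtain \<beta> e0 where \<beta>: "\<beta> \<in> paths_between (subtopology Y C) (bp C) e0"
    and f\<beta>: "\<And>t. t \<in> {0..1} \<Longrightarrow> f (\<beta> t) = q t" and e0: "e0 \<in> C" "f e0 = st'"
    using lift_into_component[OF C q] by blast
  define \<rho>0 where "\<rho>0 = p #\<^sub>p (gam C #\<^sub>p \<beta>)"
  have \<rho>0: "\<rho>0 \<in> paths_between Y dag e0"
    unfolding \<rho>0_def using p gam[OF C] paths_between_subtopologyD[OF \<beta>] by blast
  have "pclass X (f \<circ> \<rho>0) = pclass X (f \<circ> \<rho>)"
    unfolding \<rho>0_def f\<rho> gp bq by (rule phi_lift_of_representatives[OF C p q \<beta> f\<beta>])
  then have "phom X (f \<circ> \<rho>0) (f \<circ> \<rho>)"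
    using \<rho>0 by (simp add: pclass_eq_iff paths_between_def)
  then obtain \<sigma> where \<sigma>: "\<sigma> \<in> paths_between Y e0 e" and f\<sigma>: "\<And>t. t \<in> {0..1} \<Longrightarrow> f (\<sigma> t) = st'"
    and h: "phom Y (\<rho>0 #\<^sub>p \<sigma>) \<rho>"
    using fibrant_lift_difference[OF fib \<rho>0 \<rho>] e0(2) by metis
  have \<sigma>C: "\<sigma> \<in> paths_between (subtopology Y C) e0 e"
    using \<sigma> f\<sigma> e0 U'(2) pathin_component[OF C] by (simp add: paths_between_def)
  then show "e \<in> C"
    using pathin_in_topspace[of "subtopology Y C" \<sigma> 1] by (simp add: paths_between_def)
  fix \<delta>
  assume \<delta>: "\<delta> \<in> paths_between (subtopology Y C) (bp C) e"
  have "f e = st'"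
    using f\<sigma>[of 1] \<sigma> by (simp add: paths_between_def)
  with C \<rho> have "lifted_elt C \<rho> \<delta> = lifted_elt C \<rho> (\<beta> #\<^sub>p \<sigma>)"
    using \<delta> paths_between_pjoin[OF \<beta> \<sigma>C] by (rule lifted_elt_indep_path)
  also have "\<dots> = lifted_elt C \<rho>0 \<beta>"
    using C \<rho>0 \<beta> \<sigma>C f\<sigma> phom_sym[OF h] by (rule lifted_elt_fibre_path)
  also have "\<dots> = tensor C g b"
    unfolding \<rho>0_def gp bq using C p q \<beta> f\<beta> by (rule lifted_elt_canonical)
  finally show "lifted_elt C \<rho> \<delta> = tensor C g b" .
qed

lemma lift_biset_elt:
  assumes c: "c \<in> biset X f dag st"
  obtains \<rho> e where "\<rho> \<in> paths_between Y dag e" "f e = st'"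
    "pclass X (f \<circ> \<rho>) = cjoin X c (pclass X gst)"
proof -
  obtain w where w: "w \<in> paths_between X (f dag) st" and cw: "c = pclass X w"
    using c unfolding biset_def by (rule pclassesE)
  have wgst: "w #\<^sub>p gst \<in> paths_between X (f dag) st'"
    using w gst by blast
  then have "pathin X (w #\<^sub>p gst)" "f dag = (w #\<^sub>p gst) 0"
    by (simp_all add: paths_between_def)
  then obtain \<rho> where \<rho>: "pathin Y \<rho>" "\<rho> 0 = dag" and f\<rho>: "\<And>t. t \<in> {0..1} \<Longrightarrow> f (\<rho> t) = (w #\<^sub>p gst) t"
    using fibrant_path_lift[OF fib _ dag] by blast
  have "pclass X (f \<circ> \<rho>) = pclass X (w #\<^sub>p gst)"
    using wgst f\<rho> by (intro pclass_eq_on) (auto simp: paths_between_def)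
  also have "\<dots> = cjoin X c (pclass X gst)"
    unfolding cw using w gst by (rule cjoin_pclass[symmetric])
  finally show ?thesis
    using that[of \<rho> "\<rho> 1"] \<rho> f\<rho>[of 1] wgst by (simp add: paths_between_def)
qed

lemma phi_lifted_elt:
  assumes C: "C \<in> comps Y f U'" and \<rho>: "\<rho> \<in> paths_between Y dag e" and e: "f e = st'"
    and \<delta>: "\<delta> \<in> paths_between (subtopology Y C) (bp C) e"
  shows "phi C (pclass Y ((\<rho> #\<^sub>p prev \<delta>) #\<^sub>p prev (gam C))) (pclass X' (f \<circ> \<delta>)) =
           cjoin X (pclass X (f \<circ> \<rho>)) (cinv X (pclass X gst))"
proof -
  have \<delta>Y: "\<delta> \<in> paths_between Y (bp C) e"
    using \<delta> by (rule paths_between_subtopologyD)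
  have p: "(\<rho> #\<^sub>p prev \<delta>) #\<^sub>p prev (gam C) \<in> paths_between Y dag dag"
    using \<rho> \<delta>Y gam[OF C] by blast
  have q: "f \<circ> \<delta> \<in> paths_between X' (f (bp C)) st'"
    using paths_between_compose[OF \<delta> continuous_f_component[OF C]] e by simp
  show ?thesis
    unfolding phi_pclass[OF C p q] using \<rho> \<delta>Y gam[OF C] gst e
    by (simp add: pclass_decompose paths_between_def)
qed

definition Phi :: "'b set \<times> ((real \<Rightarrow> 'b) set \<times> (real \<Rightarrow> 'a) set) set \<Rightarrow> (real \<Rightarrow> 'a) set" where
  "Phi = (\<lambda>(C, T). tensor_lift (phi C) T)"

lemma Phi_tensor:
  assumes "C \<in> comps Y f U'" "g \<in> fund_group Y dag" "b \<in> biset X' f (bp C) st'"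
  shows "Phi (C, tensor C g b) = phi C g b"
  unfolding Phi_def factor_elt_def using phi_balanced[OF assms(1)] assms(2,3)
  by (simp add: tensor_lift_tensor_elt)

lemma mem_factorsE:
  assumes "x \<in> (SIGMA C:comps Y f U'. factor Y X f dag U' st' C (bp C) (gam C))"
  obtains C g b where "x = (C, tensor C g b)" "C \<in> comps Y f U'" "g \<in> fund_group Y dag"
    "b \<in> biset X' f (bp C) st'"
  using assms unfolding factor_def factor_elt_def tensor_prod_def tensor_elt_def
  by (auto elim!: quotientE)

lemma tensor_mem_factors:
  assumes "C \<in> comps Y f U'" "g \<in> fund_group Y dag" "b \<in> biset X' f (bp C) st'"
  shows "(C, tensor C g b) \<in> (SIGMA C:comps Y f U'. factor Y X f dag U' st' C (bp C) (gam C))"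
  using assms unfolding factor_def factor_elt_def tensor_prod_def tensor_elt_def
  by (auto intro: quotientI)

lemma inj_on_Phi: "inj_on Phi (SIGMA C:comps Y f U'. factor Y X f dag U' st' C (bp C) (gam C))"
proof (rule inj_onI)
  fix x x'
  assume x: "x \<in> (SIGMA C:comps Y f U'. factor Y X f dag U' st' C (bp C) (gam C))"
    and x': "x' \<in> (SIGMA C:comps Y f U'. factor Y X f dag U' st' C (bp C) (gam C))"
    and eq: "Phi x = Phi x'"
  obtain C g b where xe: "x = (C, tensor C g b)" and C: "C \<in> comps Y f U'"
    and g: "g \<in> fund_group Y dag" and b: "b \<in> biset X' f (bp C) st'"
    using x by (rule mem_factorsE)
  obtain C' g' b' where xe': "x' = (C', tensor C' g' b')" and C': "C' \<in> comps Y f U'"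
    and g': "g' \<in> fund_group Y dag" and b': "b' \<in> biset X' f (bp C') st'"
    using x' by (rule mem_factorsE)
  have phi_eq: "phi C g b = phi C' g' b'"
    using eq unfolding xe xe' Phi_tensor[OF C g b] Phi_tensor[OF C' g' b'] .
  obtain \<rho> e where \<rho>: "\<rho> \<in> paths_between Y dag e"
    and f\<rho>: "pclass X (f \<circ> \<rho>) = cjoin X (phi C g b) (pclass X gst)"
    using lift_biset_elt[OF phi_in_biset[OF C g b]] by blast
  note lift = lift_determines_elt[OF C g b \<rho> f\<rho>] lift_determines_elt[OF C' g' b' \<rho> f\<rho>[unfolded phi_eq]]
  then have CC': "C = C'"
    using component_unique[OF C C'] by blast
  obtain \<delta> where "\<delta> \<in> paths_between (subtopology Y C) (bp C) e"
    using component_path[OF C bp[OF C] lift(1)] .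
  then show "x = x'"
    unfolding xe xe' using lift(2)[of \<delta>] lift(4)[of \<delta>] CC' by simp
qed

lemma Phi_image: "Phi ` (SIGMA C:comps Y f U'. factor Y X f dag U' st' C (bp C) (gam C)) = biset X f dag st"
proof (intro equalityI subsetI)
  fix c
  assume "c \<in> Phi ` (SIGMA C:comps Y f U'. factor Y X f dag U' st' C (bp C) (gam C))"
  then show "c \<in> biset X f dag st"
    by (auto elim!: mem_factorsE simp: Phi_tensor phi_in_biset)
next
  fix c
  assume c: "c \<in> biset X f dag st"
  obtain \<rho> e where \<rho>: "\<rho> \<in> paths_between Y dag e" and e: "f e = st'"
    and f\<rho>: "pclass X (f \<circ> \<rho>) = cjoin X c (pclass X gst)"
    using lift_biset_elt[OF c] by blast
  obtain C where C: "C \<in> comps Y f U'" and eC: "e \<in> C"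
    using in_component[of e] \<rho> e U'(2) by (auto simp: paths_between_def)
  obtain \<delta> where \<delta>: "\<delta> \<in> paths_between (subtopology Y C) (bp C) e"
    using component_path[OF C bp[OF C] eC] .
  define g where "g = pclass Y ((\<rho> #\<^sub>p prev \<delta>) #\<^sub>p prev (gam C))"
  define b where "b = pclass X' (f \<circ> \<delta>)"
  have g: "g \<in> fund_group Y dag"
    unfolding g_def fund_group_def using \<rho> paths_between_subtopologyD[OF \<delta>] gam[OF C]
    by (intro pclassesI) blast
  have b: "b \<in> biset X' f (bp C) st'"
    unfolding b_def biset_def using paths_between_compose[OF \<delta> continuous_f_component[OF C]] e
    by (intro pclassesI) simp
  have "phi C g b = c"
    using phi_lifted_elt[OF C \<rho> e \<delta>] c gst unfolding g_def b_def f\<rho>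
    by (simp add: mem_pclasses_iff biset_def paths_between_def)
  then show "c \<in> Phi ` (SIGMA C:comps Y f U'. factor Y X f dag U' st' C (bp C) (gam C))"
    using Phi_tensor[OF C g b] by (intro rev_image_eqI[OF tensor_mem_factors[OF C g b]]) simp
qed

end

theorem mainTheorem16:
  fixes Y :: "'b topology" and X :: "'a topology" and f :: "'b \<Rightarrow> 'a"
    and dag :: 'b and st :: 'a and U' :: "'a set" and st' :: 'a
    and bp :: "'b set \<Rightarrow> 'b" and gam :: "'b set \<Rightarrow> real \<Rightarrow> 'b" and gst :: "real \<Rightarrow> 'a"
  assumes fib: "fibrant Y X f"
    and pcY: "path_connected_space Y" and pcX: "path_connected_space X"
    and dag: "dag \<in> topspace Y" and st: "st \<in> topspace X"
    and U': "U' \<subseteq> topspace X" "path_connected_space (subtopology X U')" "st' \<in> U'"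
    and bp: "\<And>C. C \<in> comps Y f U' \<Longrightarrow> bp C \<in> C"
    and gam: "\<And>C. C \<in> comps Y f U' \<Longrightarrow> gam C \<in> paths_between Y dag (bp C)"
    and gst: "gst \<in> paths_between X st st'"
  shows "\<exists>\<Phi>.
     bij_betw \<Phi> (SIGMA C:comps Y f U'. factor Y X f dag U' st' C (bp C) (gam C)) (biset X f dag st) \<and>
     (\<forall>C\<in>comps Y f U'. \<forall>g\<in>fund_group Y dag. \<forall>b\<in>biset (subtopology X U') f (bp C) st'.
        \<Phi> (C, factor_elt Y X f dag U' st' C (bp C) (gam C) g b) = blact X f g (bminus X f (gam C) gst b)) \<and>
     (\<forall>C\<in>comps Y f U'. \<forall>g\<in>fund_group Y dag. \<forall>b\<in>biset (subtopology X U') f (bp C) st'.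
        \<forall>h\<in>fund_group Y dag.
        \<Phi> (C, factor_elt Y X f dag U' st' C (bp C) (gam C) (cjoin Y h g) b) =
          blact X f h (\<Phi> (C, factor_elt Y X f dag U' st' C (bp C) (gam C) g b))) \<and>
     (\<forall>C\<in>comps Y f U'. \<forall>g\<in>fund_group Y dag. \<forall>b\<in>biset (subtopology X U') f (bp C) st'.
        \<forall>l\<in>fund_group (subtopology X U') st'.
        \<Phi> (C, factor_elt Y X f dag U' st' C (bp C) (gam C) g (bract (subtopology X U') b l)) =
          bract X (\<Phi> (C, factor_elt Y X f dag U' st' C (bp C) (gam C) g b)) (cconj X gst l))"
proof -
  interpret biset_decomposition Y X f dag st U' st' bp gam gst
    using fib dag U' bp gam gst by unfold_locales
  have bij: "bij_betw Phi (SIGMA C:comps Y f U'. factor Y X f dag U' st' C (bp C) (gam C)) (biset X f dag st)"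
    using inj_on_Phi Phi_image by (simp add: bij_betw_def)
  show ?thesis
    using bij by (intro exI[of _ Phi] conjI ballI)
      (simp_all add: Phi_tensor phi_left_equivariant phi_right_equivariant fund_group_cjoin biset_bract,
       simp add: phi_def)
qed

end
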